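(* Consider NSGA-II with binary tournament selection applied to LOTZ of size $n$ (with $n$ sufficiently large), with population size $N$ satisfying $2n+2\le N=O(n)$. Then the expected number of generations until the population contains, for every vector of the Pareto front $\{(j,n-j): j=0,\dots,n\}$, a solution with that objective vector, is $O(n^2)$ (equivalently, $O(n^3)$ expected fitness evaluations).
   Context: All problems are maximization of two objectives over $\{0,1\}^n$. $\bm{x}$ dominates $\bm{y}$ if $f_i(\bm{x})\ge f_i(\bm{y})$ for all $i$ with strict inequality for some $i$; the Pareto front is the set of objective vectors of non-dominated solutions. LOTZ: $\bm f(\bm x)=\big(\sum_{i=1}^n\prod_{j=1}^i x_j,\ \sum_{i=1}^n\prod_{j=i}^n(1-x_j)\big)$ (number of leading ones, number of trailing zeros); its Pareto front is $\{(j,n-j):0\le j\le n\}$. NSGA-II (population size $N$, $N$ even): Initialize $P$ with $N$ independent uniform random strings in $\{0,1\}^n$. Each generation: (1) select $N$ parents independently from $P$ by the tournament selection scheme, using the crowded comparison $\succ_{\mathrm c}$ (defined below) with respect to ranks and crowding distances of the current population; (2) group consecutive selected parents into $N/2$ pairs; for each pair, with probability $0.9$ apply one-point crossover (choose $i\in\{1,\dots,n\}$ uniformly and exchange the first $i$ bits of the two parents), otherwise keep copies; then apply bit-wise mutation to each of the two resulting strings (flip each bit independently with probability $1/n$); the $N$ resulting offspring form $Q$; (3) partition $P\cup Q$ (a multiset) by non-dominated sorting into fronts $F_1,F_2,\dots$, where $F_1$ are the non-dominated members and $F_i$ the non-dominated members of $(P\cup Q)\setminus\bigcup_{j<i}F_j$;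 $\mathrm{rank}(\bm x)=i$ iff $\bm x\in F_i$; (4) the new population consists of $F_1,\dots,F_{i-1}$ for the largest $i$ with $|F_1\cup\dots\cup F_{i-1}|<N$... more precisely, fronts are added while the population plus the next front has size $<N$; for the critical front $F_i$, crowding distances are computed and the $N-|P|$ members of $F_i$ with largest crowding distance are added. Crowding distance of a set $S=\{\bm x^1,\dots,\bm x^l\}$ of same-rank solutions: start with $0$; for each objective $f_m$, sort $S$ ascending by $f_m$ (solutions with identical objective vectors keep their relative order or have it completely reversed), give the first and last sorted solutions distance $\infty$, and add to each interior $S[j]$ the value $\frac{f_m(S[j+1])-f_m(S[j-1])}{f_m(S[l])-f_m(S[1])}$. Crowded comparison: $\bm x\succ_{\mathrm c}\bm y$ iff $\mathrm{rank}(\bm x)<\mathrm{rank}(\bm y)$ or ($\mathrm{rank}(\bm x)=\mathrm{rank}(\bm y)$ and $\mathrm{dist}(\bm x)>\mathrm{dist}(\bm y)$). Binary tournament selection: pick two solutions from $P$ uniformly at random with replacement and return the better one w.r.t. $\succ_{\mathrm c}$, ties broken uniformly at random. *)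

theory Defs
  imports "HOL-Probability.Probability"
begin

definition LO :: "bool list \<Rightarrow> nat" where
  "LO x = length (takeWhile id x)"

definition TZ :: "bool list \<Rightarrow> nat" where
  "TZ x = length (takeWhile Not (rev x))"

definition lotz :: "bool list \<Rightarrow> nat \<times> nat" where
  "lotz x = (LO x, TZ x)"

definition dominates :: "nat \<times> nat \<Rightarrow> nat \<times> nat \<Rightarrow> bool" where
  "dominates u v \<longleftrightarrow> fst u \<ge> fst v \<and> snd u \<ge> snd v \<and> (fst u > fst v \<or> snd u > snd v)"

section \<open>Non-dominated sorting (indices into a list L, 0-based fronts)\<close>

fun remaining :: "(bool list \<Rightarrow> nat \<times> nat) \<Rightarrow> bool list list \<Rightarrow> nat \<Rightarrow> nat set"
and front :: "(bool list \<Rightarrow> nat \<times> nat) \<Rightarrow> bool list list \<Rightarrow> nat \<Rightarrow> nat set" where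
  "remaining f L 0 = {..<length L}"
| "remaining f L (Suc k) = remaining f L k - front f L k"
| "front f L k = {i \<in> remaining f L k. \<not> (\<exists>j\<in>remaining f L k. dominates (f (L!j)) (f (L!i)))}"

definition rank :: "(bool list \<Rightarrow> nat \<times> nat) \<Rightarrow> bool list list \<Rightarrow> nat \<Rightarrow> nat" where
  "rank f L i = (LEAST k. i \<in> front f L k)"

text \<open>Sorting uses the stable sort_key, so nested sorts give lexicographic keys. Ties among solutions with equal objective value are broken by a priority
  function prio (then by index); the same secondary key is used for both objectives,
  so identical objective vectors keep their relative order.\<close>

definition sorted_front ::
  "(bool list \<Rightarrow> nat \<times> nat) \<Rightarrow> (bool list list \<Rightarrow> nat \<Rightarrow> nat) \<Rightarrow> (nat \<times> nat \<Rightarrow> nat)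
    \<Rightarrow> bool list list \<Rightarrow> nat set \<Rightarrow> nat list" where
  "sorted_front f prio g L S = sort_key (\<lambda>j. g (f (L!j))) (sort_key (prio L) (sorted_list_of_set S))"

definition cd_contrib ::
  "(bool list \<Rightarrow> nat \<times> nat) \<Rightarrow> (nat \<times> nat \<Rightarrow> nat) \<Rightarrow> bool list list \<Rightarrow> nat list \<Rightarrow> nat \<Rightarrow> ereal" where
  "cd_contrib f g L xs p =
     (let l = length xs; v = (\<lambda>q. real (g (f (L ! (xs ! q))))) in
      if p = 0 \<or> p = l - 1 then \<infinity>
      else ereal ((v (p + 1) - v (p - 1)) / (v (l - 1) - v 0)))"

definition crowding_dist ::
  "(bool list \<Rightarrow> nat \<times> nat) \<Rightarrow> (bool list list \<Rightarrow> nat \<Rightarrow> nat) \<Rightarrow> bool list list \<Rightarrow> nat \<Rightarrow> ereal" where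
  "crowding_dist f prio L i =
     (let S = front f L (rank f L i) in
      \<Sum>g\<in>{fst, snd}.
        (let xs = sorted_front f prio g L S in
         \<Sum>p<length xs. if xs ! p = i then cd_contrib f g L xs p else 0))"

definition crowded_better ::
  "(bool list \<Rightarrow> nat \<times> nat) \<Rightarrow> (bool list list \<Rightarrow> nat \<Rightarrow> nat) \<Rightarrow> bool list list \<Rightarrow> nat \<Rightarrow> nat \<Rightarrow> bool" where
  "crowded_better f prio L a b \<longleftrightarrow>
     rank f L a < rank f L b \<or> (rank f L a = rank f L b \<and> crowding_dist f prio L a > crowding_dist f prio L b)"

primrec seq_pmf :: "'a pmf list \<Rightarrow> 'a list pmf" where
  "seq_pmf [] = return_pmf []"
| "seq_pmf (p # ps) = bind_pmf p (\<lambda>x. bind_pmf (seq_pmf ps) (\<lambda>xs. return_pmf (x # xs)))"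

definition uniform_string :: "nat \<Rightarrow> bool list pmf" where
  "uniform_string n = seq_pmf (replicate n (bernoulli_pmf (1/2)))"

definition init_pop :: "nat \<Rightarrow> nat \<Rightarrow> bool list list pmf" where
  "init_pop n N = seq_pmf (replicate N (uniform_string n))"

definition mutate :: "nat \<Rightarrow> bool list \<Rightarrow> bool list pmf" where
  "mutate n x = seq_pmf (map (\<lambda>b. map_pmf (\<lambda>c. if c then \<not> b else b) (bernoulli_pmf (1 / real n))) x)"

definition crossover :: "nat \<Rightarrow> bool list \<Rightarrow> bool list \<Rightarrow> (bool list \<times> bool list) pmf" where
  "crossover n x y =
     bind_pmf (bernoulli_pmf (9/10)) (\<lambda>c.
       if c then map_pmf (\<lambda>i. (take i y @ drop i x, take i x @ drop i y)) (pmf_of_set {1..n})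
       else return_pmf (x, y))"

fun variation :: "nat \<Rightarrow> bool list list \<Rightarrow> bool list list pmf" where
  "variation n (x # y # rest) =
     bind_pmf (crossover n x y) (\<lambda>(c1, c2).
     bind_pmf (mutate n c1) (\<lambda>m1.
     bind_pmf (mutate n c2) (\<lambda>m2.
     bind_pmf (variation n rest) (\<lambda>r. return_pmf (m1 # m2 # r)))))"
| "variation n _ = return_pmf []"

definition tournament ::
  "(bool list \<Rightarrow> nat \<times> nat) \<Rightarrow> (bool list list \<Rightarrow> nat \<Rightarrow> nat) \<Rightarrow> bool list list \<Rightarrow> bool list pmf" where
  "tournament f prio P =
     bind_pmf (pmf_of_set {..<length P}) (\<lambda>a.
     bind_pmf (pmf_of_set {..<length P}) (\<lambda>b.
       map_pmf (\<lambda>i. P ! i)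
         (if crowded_better f prio P a b then return_pmf a
          else if crowded_better f prio P b a then return_pmf b
          else pmf_of_set {a, b})))"

text \<open>Survival selection: the N members of R = P @ Q that come first w.r.t.
  (rank, larger crowding distance, priority, index).  This takes whole fronts while they fit
  and the members of the critical front with largest crowding distance.\<close>

definition survival ::
  "(bool list \<Rightarrow> nat \<times> nat) \<Rightarrow> (bool list list \<Rightarrow> nat \<Rightarrow> nat) \<Rightarrow> nat \<Rightarrow> bool list list \<Rightarrow> bool list list" where
  "survival f prio N R =
     (let K = set (take N (sort_key (rank f R)
                                    (sort_key (\<lambda>i. - crowding_dist f prio R i)
                                      (sort_key (prio R) [0..<length R]))))
      in map (\<lambda>i. R ! i) (filter (\<lambda>i. i \<in> K) [0..<length R]))"

definition nsga2_step ::
  "nat \<Rightarrow> nat \<Rightarrow> (bool list list \<Rightarrow> nat \<Rightarrow> nat) \<Rightarrow> bool list list \<Rightarrow> bool list list pmf" where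
  "nsga2_step n N prio P =
     bind_pmf (seq_pmf (replicate N (tournament lotz prio P))) (\<lambda>S.
     map_pmf (\<lambda>Q. survival lotz prio N (P @ Q)) (variation n S))"

definition covers_front :: "nat \<Rightarrow> bool list list \<Rightarrow> bool" where
  "covers_front n P \<longleftrightarrow> (\<forall>j\<le>n. \<exists>x\<in>set P. lotz x = (j, n - j))"

text \<open>Joint distribution of the population P_t and the flag "some P_s, s \<le> t, covers the front".\<close>

primrec nsga2_hist ::
  "nat \<Rightarrow> nat \<Rightarrow> (bool list list \<Rightarrow> nat \<Rightarrow> nat) \<Rightarrow> nat \<Rightarrow> (bool list list \<times> bool) pmf" where
  "nsga2_hist n N prio 0 = map_pmf (\<lambda>P. (P, covers_front n P)) (init_pop n N)"
| "nsga2_hist n N prio (Suc t) =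
     bind_pmf (nsga2_hist n N prio t) (\<lambda>(P, h).
       map_pmf (\<lambda>P'. (P', h \<or> covers_front n P')) (nsga2_step n N prio P))"

text \<open>T = min{t. covers_front n P_t}; E[T] = sum over t of Pr[T > t].\<close>

definition expected_generations ::
  "nat \<Rightarrow> nat \<Rightarrow> (bool list list \<Rightarrow> nat \<Rightarrow> nat) \<Rightarrow> ennreal" where
  "expected_generations n N prio =
     (\<Sum>t. ennreal (measure_pmf.prob (nsga2_hist n N prio t) {s. \<not> snd s}))"

end

theory Submission
  imports Defs
begin

text \<open>
  The proof follows the potential \<open>\<Phi>(P)\<close> = (largest number of leading ones in \<open>P\<close>) +
  (number of Pareto-front points \<open>(j, n - j)\<close> represented in \<open>P\<close>), which lies in \<open>[0, 2n + 1]\<close>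
  and equals \<open>2n + 1\<close> only once the front is covered.

  \<open>\<Phi>\<close> never decreases.  In the first front of \<open>P \<union> Q\<close> only the first and the last member of each
  objective vector (in the sorting order) can have positive crowding distance, and there are at most
  \<open>n + 1\<close> objective vectors, so at most \<open>2n + 2 \<le> N\<close> solutions have rank \<open>0\<close> and positive
  crowding distance; survival selection therefore keeps one copy of every objective vector of the
  first front, which contains a string of maximal \<open>LO\<close> and all Pareto-optimal strings.

  \<open>\<Phi>\<close> increases with probability \<open>\<Omega>(1/n)\<close> per generation.  If \<open>max LO < n\<close>, the first-front member
  of maximal \<open>LO\<close> that comes last when sorting by \<open>LO\<close> has infinite crowding distance, so it wins each
  tournament with probability at least \<open>1/(2N)\<close>; skipping crossover and flipping its first zero
  gives a string with larger \<open>LO\<close>.  Otherwise \<open>1\<^sup>n\<close> is present; if \<open>u\<close> is the largest uncovered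
  Pareto index then \<open>u + 1\<close> is covered, and its first representative has crowding distance at least
  \<open>3/n\<close>.  Since the interior crowding distances of one sorting sum to at most \<open>2\<close>, at most
  \<open>4 + 4n/3 \<le> 5N/6\<close> individuals beat it, so it wins a tournament with probability at least
  \<open>1/(12N)\<close>; flipping its last one produces \<open>(u, n - u)\<close>.  Among the \<open>N/2\<close> pairs this happens with
  probability at least \<open>1/(1440 n)\<close>, and additive drift gives \<open>E[T] \<le> 1440 n (2n + 1)\<close>.
\<close>

lemma LO_le_length: "LO x \<le> length x"
  unfolding LO_def by (metis length_takeWhile_le)

lemma TZ_le_length: "TZ x \<le> length x"
  unfolding TZ_def by (metis length_rev length_takeWhile_le)

lemma nth_less_LO: "k < LO x \<Longrightarrow> x ! k"
proof -
  assume k: "k < LO x"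
  hence "takeWhile id x ! k \<in> set (takeWhile id x)" by (simp add: LO_def)
  hence "id (takeWhile id x ! k)" by (rule set_takeWhileD[THEN conjunct2])
  moreover have "takeWhile id x ! k = x ! k" using k by (simp add: LO_def takeWhile_nth)
  ultimately show ?thesis by simp
qed

lemma nth_less_TZ: "k < TZ x \<Longrightarrow> \<not> x ! (length x - Suc k)"
proof -
  assume k: "k < TZ x"
  hence kl: "k < length (rev x)" using TZ_le_length[of x] by simp
  have "takeWhile Not (rev x) ! k \<in> set (takeWhile Not (rev x))" using k by (simp add: TZ_def)
  hence "Not (takeWhile Not (rev x) ! k)" by (rule set_takeWhileD[THEN conjunct2])
  moreover have "takeWhile Not (rev x) ! k = rev x ! k" using k by (simp add: TZ_def takeWhile_nth)
  ultimately show ?thesis using kl by (simp add: rev_nth)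
qed

lemma LO_geI: "k \<le> length x \<Longrightarrow> (\<forall>i<k. x ! i) \<Longrightarrow> k \<le> LO x"
proof (rule ccontr)
  assume a: "k \<le> length x" "\<forall>i<k. x ! i" "\<not> k \<le> LO x"
  hence "LO x < length x" by simp
  hence "\<not> x ! (LO x)" unfolding LO_def using nth_length_takeWhile[of id x] by simp
  with a show False by simp
qed

lemma LO_plus_TZ_le: "LO x + TZ x \<le> length x"
proof (rule ccontr)
  assume "\<not> LO x + TZ x \<le> length x"
  hence "length x - Suc (TZ x - 1) < LO x" "TZ x - 1 < TZ x"
    using LO_le_length[of x] TZ_le_length[of x] by auto
  from nth_less_LO[OF this(1)] nth_less_TZ[OF this(2)] show False by simp
qed

lemma lotz_sum_le: "fst (lotz x) + snd (lotz x) \<le> length x"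
  using LO_plus_TZ_le by (simp add: lotz_def)

lemma pareto_point_not_dominated:
  assumes "length y = n" "j \<le> n"
  shows "\<not> dominates (lotz y) (j, n - j)"
  using lotz_sum_le[of y] assms unfolding dominates_def by auto

lemma lotz_eq_pareto_pointD:
  assumes "length x = n" "lotz x = (j, n - j)" "j \<le> n"
  shows "x = replicate j True @ replicate (n - j) False"
proof (rule nth_equalityI)
  show "length x = length (replicate j True @ replicate (n - j) False)" using assms by simp
  fix i assume i: "i < length x"
  have lo: "LO x = j" and tz: "TZ x = n - j" using assms(2) by (auto simp: lotz_def)
  show "x ! i = (replicate j True @ replicate (n - j) False) ! i"
  proof (cases "i < j")
    case True
    then show ?thesis using nth_less_LO[of i x] lo by (simp add: nth_append)
  next
    case False
    have "n - Suc i < TZ x" using False i assms tz by auto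
    from nth_less_TZ[OF this] have "\<not> x ! (length x - Suc (n - Suc i))" .
    moreover have "length x - Suc (n - Suc i) = i" using i assms by auto
    ultimately show ?thesis using False i assms by (simp add: nth_append)
  qed
qed

lemma lotz_replicate: "lotz (replicate a True @ replicate b False) = (a, b)"
  by (cases b) (simp_all add: LO_def TZ_def lotz_def takeWhile_append)

lemma LO_flip_first_zero: "LO x < length x \<Longrightarrow> Suc (LO x) \<le> LO (x[LO x := True])"
  by (rule LO_geI) (auto simp: nth_list_update nth_less_LO less_Suc_eq)

lemma replicate_flip_last_one:
  assumes "1 \<le> j" "j \<le> n"
  shows "(replicate j True @ replicate (n - j) False)[j - 1 := False]
           = replicate (j - 1) True @ replicate (n - (j - 1)) False"
  using assms by (intro nth_equalityI) (auto simp: nth_list_update nth_append)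

lemma sorted_key_split:
  fixes h :: "'a \<Rightarrow> 'b::linorder"
  shows "sorted (map h xs) \<Longrightarrow>
    xs = filter (\<lambda>y. h y < c) xs @ filter (\<lambda>y. h y = c) xs @ filter (\<lambda>y. c < h y) xs"
proof (induction xs)
  case Nil
  then show ?case by simp
next
  case (Cons x xs)
  hence ih: "xs = filter (\<lambda>y. h y < c) xs @ filter (\<lambda>y. h y = c) xs @ filter (\<lambda>y. c < h y) xs"
    and ge: "\<forall>y\<in>set xs. h x \<le> h y" by auto
  consider "h x < c" | "h x = c" | "c < h x" by fastforce
  then show ?case
  proof cases
    case 1
    hence "h x \<noteq> c" "\<not> c < h x" by auto
    then show ?thesis using 1 ih by simp
  next
    case 2
    hence "filter (\<lambda>y. h y < c) xs = []" using ge by (force simp: filter_empty_conv)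
    then show ?thesis using 2 ih by simp
  next
    case 3
    hence "filter (\<lambda>y. h y < c) xs = []" "filter (\<lambda>y. h y = c) xs = []" using ge
      by (force simp: filter_empty_conv)+
    then show ?thesis using 3 ih by simp
  qed
qed

lemma sort_key_sort_key_prefix:
  fixes k1 :: "'a \<Rightarrow> 'b::linorder" and k2 :: "'a \<Rightarrow> 'c::linorder"
  assumes ys: "ys = sort_key k1 (sort_key k2 xs)" and p: "p < length ys" "q \<le> p"
    and min: "\<forall>y\<in>set xs. k1 (ys ! p) \<le> k1 y"
  shows "k1 (ys ! q) = k1 (ys ! p) \<and> k2 (ys ! q) \<le> k2 (ys ! p)"
proof -
  define c where "c = k1 (ys ! p)"
  have sorted1: "sorted (map k1 ys)" using ys by simp
  have before: "k1 (ys ! q') = c" if "q' \<le> p" for q'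
  proof -
    have "ys ! q' \<in> set xs" using that p ys by (metis in_set_conv_nth le_less_trans set_sort)
    hence "k1 (ys ! p) \<le> k1 (ys ! q')" using min by blast
    moreover have "k1 (ys ! q') \<le> k1 (ys ! p)"
      using sorted1 that p by (simp add: sorted_iff_nth_mono)
    ultimately show ?thesis unfolding c_def by simp
  qed
  have "filter (\<lambda>y. k1 y = c) ys = take p ys @ ys ! p # filter (\<lambda>y. k1 y = c) (drop (Suc p) ys)"
  proof -
    have "\<forall>u\<in>set (take p ys). k1 u = c"
      using before p by (auto simp: in_set_conv_nth)
    moreover have "ys = take p ys @ ys ! p # drop (Suc p) ys" using p by (metis id_take_nth_drop)
    ultimately show ?thesis unfolding c_def by (metis (mono_tags, lifting) filter.simps(2) filter_True filter_append)
  qed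
  moreover have "filter (\<lambda>y. k1 y = c) ys = filter (\<lambda>y. k1 y = c) (sort_key k2 xs)"
    unfolding ys by (rule sort_key_stable)
  ultimately have "sorted (map k2 (take p ys @ ys ! p # filter (\<lambda>y. k1 y = c) (drop (Suc p) ys)))"
    by (metis sorted_filter sorted_sort_key)
  moreover have "q < p \<Longrightarrow> ys ! q \<in> set (take p ys)" using p by (auto simp: in_set_conv_nth)
  ultimately have "k2 (ys ! q) \<le> k2 (ys ! p)" using p by (cases "q = p") (auto simp: sorted_append)
  thus ?thesis using before[OF p(2)] c_def by simp
qed

definition index_of :: "'a list \<Rightarrow> 'a \<Rightarrow> nat" where
  "index_of xs b = (THE p. p < length xs \<and> xs ! p = b)"

lemma index_of_nth: "distinct xs \<Longrightarrow> p < length xs \<Longrightarrow> index_of xs (xs ! p) = p"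
  unfolding index_of_def by (rule the_equality) (auto simp: nth_eq_iff_index_eq)

lemma index_of_in: "distinct xs \<Longrightarrow> b \<in> set xs \<Longrightarrow> index_of xs b < length xs \<and> xs ! index_of xs b = b"
  by (metis in_set_conv_nth index_of_nth)

lemma index_of_append_middle:
  "distinct (pre @ blk @ post) \<Longrightarrow> r < length blk \<Longrightarrow> index_of (pre @ blk @ post) (blk ! r) = length pre + r"
  by (metis add_less_cancel_left index_of_nth length_append nth_append_length_plus
      nth_append trans_less_add1 append_assoc)

lemma sum_if_nth_eq:
  assumes "distinct xs" "p < length xs"
  shows "(\<Sum>q<length xs. if xs ! q = xs ! p then (c q :: 'b::comm_monoid_add) else 0) = c p"
proof -
  have "(\<Sum>q<length xs. if xs ! q = xs ! p then c q else 0) = (\<Sum>q<length xs. if q = p then c q else 0)"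
    using assms by (intro sum.cong) (auto simp: nth_eq_iff_index_eq)
  also have "\<dots> = c p" using assms by simp
  finally show ?thesis .
qed

lemma sum_if_nth_notin:
  "b \<notin> set xs \<Longrightarrow> (\<Sum>q<length xs. if xs ! q = b then (c q :: 'b::comm_monoid_add) else 0) = 0"
  by (intro sum.neutral) auto

lemma sum_central_differences_le:
  fixes k :: "nat \<Rightarrow> real"
  assumes mono: "\<And>a b. a \<le> b \<Longrightarrow> b < l \<Longrightarrow> k a \<le> k b" and l: "2 \<le> l"
  shows "(\<Sum>p\<in>{1..<l-1}. k (p+1) - k (p-1)) \<le> 2 * (k (l-1) - k 0)"
proof -
  have fwd: "(\<Sum>p\<in>{1..<l-1}. k (p+1) - k p) = k (l-1) - k 1"
    using sum_Suc_diff'[of 1 "l-1" k] l by (simp add: Suc_leI)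
  have "(\<Sum>p\<in>{1..<l-1}. k p - k (p-1)) = (\<Sum>p\<in>{0..<l-2}. k (Suc p) - k p)"
    by (rule sum.reindex_bij_witness[of _ Suc "\<lambda>p. p - 1"]) auto
  also have "\<dots> = k (l-2) - k 0" using sum_Suc_diff'[of 0 "l-2" k] by simp
  finally have bwd: "(\<Sum>p\<in>{1..<l-1}. k p - k (p-1)) = k (l-2) - k 0" .
  have "(\<Sum>p\<in>{1..<l-1}. k (p+1) - k (p-1)) =
        (\<Sum>p\<in>{1..<l-1}. k (p+1) - k p) + (\<Sum>p\<in>{1..<l-1}. k p - k (p-1))"
    by (simp add: sum.distrib[symmetric])
  also have "\<dots> = (k (l-1) - k 1) + (k (l-2) - k 0)" using fwd bwd by simp
  also have "\<dots> \<le> 2 * (k (l-1) - k 0)"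
  proof -
    have "k 0 \<le> k 1" "k (l-2) \<le> k (l-1)" by (rule mono; use l in auto)+
    then show ?thesis by simp
  qed
  finally show ?thesis .
qed

section \<open>The first front and its crowding distances\<close>

lemma front_0: "front f L 0 = {i. i < length L \<and> \<not> (\<exists>j<length L. dominates (f (L!j)) (f (L!i)))}"
  by auto

declare front.simps [simp del] remaining.simps [simp del]

lemma finite_front_0: "finite (front f L 0)" and front_0_subset: "front f L 0 \<subseteq> {..<length L}"
  by (auto simp: front_0)

lemma front_0_not_dominated: "i \<in> front f L 0 \<Longrightarrow> k \<in> front f L 0 \<Longrightarrow> \<not> dominates (f (L!k)) (f (L!i))"
  by (auto simp: front_0)

lemma rank_front_0: "i \<in> front f L 0 \<Longrightarrow> rank f L i = 0"
  unfolding rank_def by (rule Least_eq_0)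

lemma front_0_key_eq_iff:
  assumes "i \<in> front f L 0" "k \<in> front f L 0" "g = fst \<or> g = snd"
  shows "g (f (L!k)) = g (f (L!i)) \<longleftrightarrow> f (L!k) = f (L!i)"
  using front_0_not_dominated[OF assms(1,2)] front_0_not_dominated[OF assms(2,1)] assms(3)
  by (cases "f (L!k)"; cases "f (L!i)") (auto simp: dominates_def)

lemma front_0_fst_less_imp_snd_greater:
  assumes "i \<in> front f L 0" "k \<in> front f L 0" "fst (f (L!k)) < fst (f (L!i))"
  shows "snd (f (L!i)) < snd (f (L!k))"
  using front_0_not_dominated[OF assms(2,1)] assms(3)
  by (cases "f (L!k)"; cases "f (L!i)") (auto simp: dominates_def)

lemma card_front_0_vectors_le:
  assumes "\<forall>y\<in>front f L 0. fst (f (L!y)) \<le> n"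
  shows "card ((\<lambda>i. f (L!i)) ` front f L 0) \<le> n + 1"
proof -
  let ?W = "(\<lambda>i. f (L!i)) ` front f L 0"
  have "inj_on fst ?W" using front_0_key_eq_iff[of _ f L _ fst] by (auto simp: inj_on_def)
  hence "card ?W = card (fst ` ?W)" by (simp add: card_image)
  also have "\<dots> \<le> card {0..n}" using assms by (intro card_mono) auto
  finally show ?thesis by simp
qed

lemma front_0_contains_max_LO:
  assumes "R \<noteq> []"
  shows "\<exists>i\<in>front lotz R 0. LO (R!i) = Max (LO ` set R)"
proof -
  let ?m = "Max (LO ` set R)"
  let ?T = "{i. i < length R \<and> LO (R!i) = ?m}"
  have "?m \<in> LO ` set R" using assms by (intro Max_in) auto
  hence "?T \<noteq> {}" by (auto simp: in_set_conv_nth)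
  hence "Max ((\<lambda>i. TZ (R!i)) ` ?T) \<in> (\<lambda>i. TZ (R!i)) ` ?T" by (intro Max_in) auto
  then obtain i where i: "i \<in> ?T" "TZ (R!i) = Max ((\<lambda>i. TZ (R!i)) ` ?T)" by auto
  have "\<not> dominates (lotz (R!j)) (lotz (R!i))" if j: "j < length R" for j
  proof
    assume dom: "dominates (lotz (R!j)) (lotz (R!i))"
    have "LO (R!j) \<le> ?m" using j by (intro Max_ge) auto
    hence "LO (R!j) = ?m" using dom i(1) by (auto simp: dominates_def lotz_def)
    hence "TZ (R!j) \<le> TZ (R!i)" using j i(2) by (simp add: Max_ge)
    thus False using dom i \<open>LO (R!j) = ?m\<close> by (auto simp: dominates_def lotz_def)
  qed
  thus ?thesis using i(1) by (auto simp: front_0)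
qed

lemma pareto_point_in_front_0:
  assumes "i < length R" "\<forall>x\<in>set R. length x = n" "lotz (R!i) = (j, n - j)" "j \<le> n"
  shows "i \<in> front lotz R 0"
  using assms pareto_point_not_dominated[of _ n j] by (auto simp: front_0)

text \<open>By stability of \<open>sort_key\<close>, each block appears contiguously, and in this order, in both
  sortings used by the crowding distance.\<close>

definition front_0_by_prio ::
  "(bool list \<Rightarrow> nat \<times> nat) \<Rightarrow> (bool list list \<Rightarrow> nat \<Rightarrow> nat) \<Rightarrow> bool list list \<Rightarrow> nat list" where
  "front_0_by_prio f prio L = sort_key (prio L) (sorted_list_of_set (front f L 0))"

definition block ::
  "(bool list \<Rightarrow> nat \<times> nat) \<Rightarrow> (bool list list \<Rightarrow> nat \<Rightarrow> nat) \<Rightarrow> bool list list \<Rightarrow> nat \<times> nat \<Rightarrow> nat list" where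
  "block f prio L w = filter (\<lambda>y. f (L!y) = w) (front_0_by_prio f prio L)"

abbreviation sorted_front_0 ::
  "(bool list \<Rightarrow> nat \<times> nat) \<Rightarrow> (bool list list \<Rightarrow> nat \<Rightarrow> nat) \<Rightarrow> (nat \<times> nat \<Rightarrow> nat) \<Rightarrow> bool list list \<Rightarrow> nat list" where
  "sorted_front_0 f prio g L \<equiv> sorted_front f prio g L (front f L 0)"

lemma set_front_0_by_prio: "set (front_0_by_prio f prio L) = front f L 0"
  using finite_front_0 by (auto simp: front_0_by_prio_def)

lemma set_sorted_front_0: "set (sorted_front_0 f prio g L) = front f L 0"
  and distinct_sorted_front_0: "distinct (sorted_front_0 f prio g L)"
  and sorted_sorted_front_0: "sorted (map (\<lambda>j. g (f (L!j))) (sorted_front_0 f prio g L))"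
  using finite_front_0 by (auto simp: sorted_front_def)

lemma set_block: "set (block f prio L w) = {y \<in> front f L 0. f (L!y) = w}"
  using set_front_0_by_prio by (auto simp: block_def)

lemma block_nonempty:
  assumes "i \<in> front f L 0"
  shows "block f prio L (f (L!i)) \<noteq> []" "i \<in> set (block f prio L (f (L!i)))"
  using assms set_block[of f prio L "f (L!i)"] by auto

lemma hd_block:
  fixes prio :: "bool list list \<Rightarrow> nat \<Rightarrow> nat"
  assumes "i \<in> front f L 0"
  defines "h \<equiv> hd (block f prio L (f (L!i)))"
  shows "h \<in> front f L 0" "f (L!h) = f (L!i)" "hd (block f prio L (f (L!h))) = h"
proof -
  have "h \<in> set (block f prio L (f (L!i)))" using block_nonempty[OF assms(1)] unfolding h_def by simp
  thus "h \<in> front f L 0" "f (L!h) = f (L!i)" using set_block by auto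
  thus "hd (block f prio L (f (L!h))) = h" unfolding h_def by simp
qed

lemma sorted_front_0_split:
  assumes "i \<in> front f L 0" "g = fst \<or> g = snd"
  shows "sorted_front_0 f prio g L =
           filter (\<lambda>y. g (f (L!y)) < g (f (L!i))) (sorted_front_0 f prio g L) @ block f prio L (f (L!i))
           @ filter (\<lambda>y. g (f (L!i)) < g (f (L!y))) (sorted_front_0 f prio g L)"
proof -
  have "filter (\<lambda>y. g (f (L!y)) = g (f (L!i))) (sorted_front_0 f prio g L)
      = filter (\<lambda>y. g (f (L!y)) = g (f (L!i))) (front_0_by_prio f prio L)"
    unfolding sorted_front_def front_0_by_prio_def by (rule sort_key_stable)
  also have "\<dots> = block f prio L (f (L!i))"
    unfolding block_def using set_front_0_by_prio front_0_key_eq_iff[OF assms(1) _ assms(2)]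
    by (intro filter_cong) auto
  finally have "filter (\<lambda>y. g (f (L!y)) = g (f (L!i))) (sorted_front_0 f prio g L)
                 = block f prio L (f (L!i))" .
  with sorted_key_split[OF sorted_sorted_front_0[where g=g and f=f and prio=prio and L=L],
      where c="g (f (L!i))"]
  show ?thesis by simp
qed

lemma index_of_sorted_front_0:
  assumes "i \<in> front f L 0" "g = fst \<or> g = snd" "r < length (block f prio L (f (L!i)))"
    "block f prio L (f (L!i)) ! r = i"
  shows "index_of (sorted_front_0 f prio g L) i
           = length (filter (\<lambda>y. g (f (L!y)) < g (f (L!i))) (sorted_front_0 f prio g L)) + r"
  using index_of_append_middle[of "filter (\<lambda>y. g (f (L!y)) < g (f (L!i))) (sorted_front_0 f prio g L)"
      "block f prio L (f (L!i))" "filter (\<lambda>y. g (f (L!i)) < g (f (L!y))) (sorted_front_0 f prio g L)" r]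
    sorted_front_0_split[OF assms(1,2), of prio] distinct_sorted_front_0[of f prio g L] assms(3,4)
  by simp

lemma fst_neq_snd: "(fst :: nat \<times> nat \<Rightarrow> nat) \<noteq> snd"
  by (metis fst_conv snd_conv zero_neq_one)

lemma crowding_dist_front_0:
  assumes "i \<in> front f L 0"
  shows "crowding_dist f prio L i =
    cd_contrib f fst L (sorted_front_0 f prio fst L) (index_of (sorted_front_0 f prio fst L) i) +
    cd_contrib f snd L (sorted_front_0 f prio snd L) (index_of (sorted_front_0 f prio snd L) i)"
proof -
  have inner: "(\<Sum>p<length (sorted_front_0 f prio g L).
                  if sorted_front_0 f prio g L ! p = i then cd_contrib f g L (sorted_front_0 f prio g L) p else 0)
      = cd_contrib f g L (sorted_front_0 f prio g L) (index_of (sorted_front_0 f prio g L) i)" for g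
  proof -
    have pi: "index_of (sorted_front_0 f prio g L) i < length (sorted_front_0 f prio g L)
          \<and> sorted_front_0 f prio g L ! index_of (sorted_front_0 f prio g L) i = i"
      using index_of_in[OF distinct_sorted_front_0] set_sorted_front_0 assms by metis
    show ?thesis
      using sum_if_nth_eq[OF distinct_sorted_front_0 pi[THEN conjunct1],
          of "cd_contrib f g L (sorted_front_0 f prio g L)"] pi
      by simp
  qed
  show ?thesis
    unfolding crowding_dist_def rank_front_0[OF assms] Let_def using fst_neq_snd by (simp add: inner)
qed

lemma crowding_dist_rank_0_not_front_0:
  assumes "i \<notin> front f L 0" "rank f L i = 0"
  shows "crowding_dist f prio L i = 0"
proof -
  have "i \<notin> set (sorted_front_0 f prio g L)" for g
    using set_sorted_front_0[of f prio g L] assms(1) by simp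
  thus ?thesis unfolding crowding_dist_def assms(2) Let_def by (simp add: sum_if_nth_notin)
qed

definition cd_gap :: "(nat \<Rightarrow> nat) \<Rightarrow> nat list \<Rightarrow> nat \<Rightarrow> real" where
  "cd_gap \<kappa> xs p = (real (\<kappa> (xs!(p+1))) - real (\<kappa> (xs!(p-1)))) /
                    (real (\<kappa> (xs!(length xs - 1))) - real (\<kappa> (xs!0)))"

definition cd_term :: "(nat \<Rightarrow> nat) \<Rightarrow> nat list \<Rightarrow> nat \<Rightarrow> ereal" where
  "cd_term \<kappa> xs p = (if p = 0 \<or> p = length xs - 1 then \<infinity> else ereal (cd_gap \<kappa> xs p))"

lemma cd_contrib_eq_cd_term: "cd_contrib f g L xs p = cd_term (\<lambda>y. g (f (L!y))) xs p"
  by (simp add: cd_contrib_def cd_term_def cd_gap_def Let_def)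

lemma cd_gap_nonneg:
  assumes "sorted (map \<kappa> xs)" "0 < p" "p < length xs - 1"
  shows "0 \<le> cd_gap \<kappa> xs p"
proof -
  have "\<kappa> (xs!(p-1)) \<le> \<kappa> (xs!(p+1))" "\<kappa> (xs!0) \<le> \<kappa> (xs!(length xs - 1))"
    using assms by (simp_all add: sorted_iff_nth_mono)
  thus ?thesis unfolding cd_gap_def by (simp add: divide_nonneg_nonneg)
qed

lemma cd_term_nonneg: "sorted (map \<kappa> xs) \<Longrightarrow> p < length xs \<Longrightarrow> 0 \<le> cd_term \<kappa> xs p"
  using cd_gap_nonneg[of \<kappa> xs p] unfolding cd_term_def by auto

lemma cd_term_inside_block:
  assumes "xs = pre @ bl @ post" "\<forall>y\<in>set bl. \<kappa> y = c" "0 < r" "Suc r < length bl"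
  shows "cd_term \<kappa> xs (length pre + r) = 0"
proof -
  have "xs ! (length pre + r + 1) = bl ! Suc r" "xs ! (length pre + r - 1) = bl ! (r - 1)"
    using assms by (auto simp: nth_append)
  moreover have "bl ! Suc r \<in> set bl" "bl ! (r - 1) \<in> set bl" using assms by auto
  ultimately show ?thesis using assms unfolding cd_term_def cd_gap_def by auto
qed

lemma cd_term_block_start_ge:
  assumes s: "sorted (map \<kappa> xs)" and xs: "xs = pre @ bl @ post" and bl: "bl \<noteq> []"
    and pre: "\<forall>y\<in>set pre. \<kappa> y + d \<le> \<kappa> (hd bl)" and d: "1 \<le> d"
    and M: "\<forall>y\<in>set xs. \<kappa> y \<le> M"
  shows "ereal (real d / real M) \<le> cd_term \<kappa> xs (length pre)"
proof (cases "length pre = 0 \<or> length pre = length xs - 1")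
  case True
  then show ?thesis by (simp add: cd_term_def)
next
  case False
  let ?p = "length pre"
  let ?k = "\<lambda>q. real (\<kappa> (xs!q))"
  have "length xs = ?p + length bl + length post" "0 < length bl" using xs bl by simp_all
  hence l: "?p + 1 < length xs" "0 < ?p" using False by linarith+
  have "xs ! ?p = hd bl" using xs bl by (simp add: nth_append hd_conv_nth)
  moreover have "xs ! (?p - 1) \<in> set pre" using xs l by (simp add: nth_append)
  ultimately have a: "?k (?p - 1) + d \<le> ?k ?p" using pre by (metis of_nat_add of_nat_le_iff)
  have b: "?k ?p \<le> ?k (?p + 1)" "?k 0 \<le> ?k (?p - 1)" "?k (?p + 1) \<le> ?k (length xs - 1)"
    using s l by (simp_all add: sorted_iff_nth_mono)
  have "?k (length xs - 1) \<le> M" using M l by simp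
  hence D: "0 < ?k (length xs - 1) - ?k 0" "?k (length xs - 1) - ?k 0 \<le> M" using a b d by auto
  have "real d / M \<le> real d / (?k (length xs - 1) - ?k 0)"
    using D d by (intro divide_left_mono) auto
  also have "\<dots> \<le> (?k (?p + 1) - ?k (?p - 1)) / (?k (length xs - 1) - ?k 0)"
    using D a b by (intro divide_right_mono) auto
  finally show ?thesis using False unfolding cd_term_def cd_gap_def by simp
qed

lemma sum_cd_gap_le_2:
  assumes s: "sorted (map \<kappa> xs)"
  shows "(\<Sum>p\<in>{1..<length xs - 1}. cd_gap \<kappa> xs p) \<le> 2"
proof (cases "2 \<le> length xs")
  case False
  hence "{1..<length xs - 1} = {}" by auto
  then show ?thesis by simp
next
  case True
  let ?k = "\<lambda>q. real (\<kappa> (xs!q))"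
  let ?D = "?k (length xs - 1) - ?k 0"
  have mono: "\<And>a b. a \<le> b \<Longrightarrow> b < length xs \<Longrightarrow> ?k a \<le> ?k b"
    using s by (simp add: sorted_iff_nth_mono)
  have "(\<Sum>p\<in>{1..<length xs - 1}. cd_gap \<kappa> xs p) = (\<Sum>p\<in>{1..<length xs - 1}. ?k (p+1) - ?k (p-1)) / ?D"
    unfolding cd_gap_def by (simp add: sum_divide_distrib)
  also have "\<dots> \<le> 2"
  proof (cases "?D = 0")
    case False
    have "?k 0 \<le> ?k (length xs - 1)" using mono True by simp
    hence "0 < ?D" using False by linarith
    thus ?thesis using sum_central_differences_le[of "length xs" ?k, OF mono True]
      by (simp add: divide_le_eq)
  qed simp
  finally show ?thesis .
qed

lemma cd_contrib_block_start_ge: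
  assumes i: "i \<in> front f L 0" and g: "g = fst \<or> g = snd"
    and hd: "hd (block f prio L (f (L!i))) = i"
    and d: "1 \<le> d" and gap: "\<forall>y\<in>front f L 0. g (f (L!y)) < g (f (L!i)) \<longrightarrow> g (f (L!y)) + d \<le> g (f (L!i))"
    and M: "\<forall>y\<in>front f L 0. g (f (L!y)) \<le> M"
  shows "ereal (real d / real M) \<le> cd_contrib f g L (sorted_front_0 f prio g L) (index_of (sorted_front_0 f prio g L) i)"
proof -
  let ?bl = "block f prio L (f (L!i))"
  let ?pre = "filter (\<lambda>y. g (f (L!y)) < g (f (L!i))) (sorted_front_0 f prio g L)"
  have ne: "?bl \<noteq> []" using block_nonempty[OF i] by simp
  have "?bl ! 0 = i" using hd ne by (simp add: hd_conv_nth)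
  hence "index_of (sorted_front_0 f prio g L) i = length ?pre"
    using index_of_sorted_front_0[OF i g, of 0 prio] ne by simp
  moreover have "ereal (real d / real M) \<le> cd_term (\<lambda>y. g (f (L!y))) (sorted_front_0 f prio g L) (length ?pre)"
  proof (rule cd_term_block_start_ge[OF sorted_sorted_front_0 sorted_front_0_split[OF i g] ne _ d])
    show "\<forall>y\<in>set ?pre. g (f (L ! y)) + d \<le> g (f (L ! hd ?bl))"
      using gap set_sorted_front_0 hd by auto
    show "\<forall>y\<in>set (sorted_front_0 f prio g L). g (f (L ! y)) \<le> M" using M set_sorted_front_0 by auto
  qed
  ultimately show ?thesis by (simp add: cd_contrib_eq_cd_term)
qed

lemma cd_contrib_nonneg:
  assumes "i \<in> front f L 0"
  shows "0 \<le> cd_contrib f g L (sorted_front_0 f prio g L) (index_of (sorted_front_0 f prio g L) i)"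
proof -
  have "index_of (sorted_front_0 f prio g L) i < length (sorted_front_0 f prio g L)"
    using index_of_in[OF distinct_sorted_front_0] set_sorted_front_0 assms by metis
  thus ?thesis using cd_term_nonneg[OF sorted_sorted_front_0] by (simp add: cd_contrib_eq_cd_term)
qed

lemma crowding_dist_block_start_ge:
  assumes i: "i \<in> front f L 0" and hd: "hd (block f prio L (f (L!i))) = i" and d: "1 \<le> d"
    and gap: "\<forall>y\<in>front f L 0. fst (f (L!y)) < fst (f (L!i)) \<longrightarrow> fst (f (L!y)) + d \<le> fst (f (L!i))"
    and M: "\<forall>y\<in>front f L 0. fst (f (L!y)) \<le> M \<and> snd (f (L!y)) \<le> M"
  shows "ereal (real d / real M) + ereal (1 / real M) \<le> crowding_dist f prio L i"
  unfolding crowding_dist_front_0[OF i]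
  using cd_contrib_block_start_ge[OF i _ hd d gap, of M] cd_contrib_block_start_ge[OF i _ hd, of snd 1 M] M
  by (intro add_mono) auto

lemma crowding_dist_block_start_pos:
  assumes "i \<in> front f L 0" "hd (block f prio L (f (L!i))) = i"
    and "\<forall>y\<in>front f L 0. fst (f (L!y)) \<le> M \<and> snd (f (L!y)) \<le> M" "0 < M"
  shows "0 < crowding_dist f prio L i"
proof -
  have "ereal (real 1 / real M) + ereal (1 / real M) \<le> crowding_dist f prio L i"
    using assms by (intro crowding_dist_block_start_ge) auto
  moreover have "0 < ereal (real 1 / real M) + ereal (1 / real M)" using assms(4) by simp
  ultimately show ?thesis by order
qed

lemma crowding_dist_inside_block:
  assumes i: "i \<in> front f L 0" and r: "0 < r" "Suc r < length (block f prio L (f (L!i)))"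
    "block f prio L (f (L!i)) ! r = i"
  shows "crowding_dist f prio L i = 0"
proof -
  have "cd_contrib f g L (sorted_front_0 f prio g L) (index_of (sorted_front_0 f prio g L) i) = 0"
    if g: "g = fst \<or> g = snd" for g
  proof -
    have "\<forall>y\<in>set (block f prio L (f (L!i))). g (f (L!y)) = g (f (L!i))" using set_block by auto
    thus ?thesis using index_of_sorted_front_0[OF i g, of r prio] r
        cd_term_inside_block[OF sorted_front_0_split[OF i g] _ r(1,2)]
      by (simp add: cd_contrib_eq_cd_term)
  qed
  thus ?thesis unfolding crowding_dist_front_0[OF i] by simp
qed

lemma crowding_dist_pos_imp_block_end:
  assumes i: "i \<in> front f L 0" and pos: "0 < crowding_dist f prio L i"
  shows "i = hd (block f prio L (f (L!i))) \<or> i = last (block f prio L (f (L!i)))"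
proof -
  let ?bl = "block f prio L (f (L!i))"
  obtain r where r: "r < length ?bl" "?bl ! r = i" using block_nonempty[OF i] by (metis in_set_conv_nth)
  consider "r = 0" | "Suc r = length ?bl" | "0 < r" "Suc r < length ?bl" using r by linarith
  then show ?thesis
  proof cases
    case 1 then show ?thesis using r by (simp add: hd_conv_nth)
  next
    case 2 then show ?thesis using r by (metis diff_Suc_1 last_conv_nth list.size(3) nat.distinct(1))
  next
    case 3 then show ?thesis using crowding_dist_inside_block[OF i 3 r(2)] pos by simp
  qed
qed

lemma card_crowding_dist_pos_le:
  "card {i \<in> front f L 0. 0 < crowding_dist f prio L i} \<le> 2 * card ((\<lambda>i. f (L!i)) ` front f L 0)"
proof -
  let ?W = "(\<lambda>i. f (L!i)) ` front f L 0"
  have "{i \<in> front f L 0. 0 < crowding_dist f prio L i}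
        \<subseteq> (\<Union>w\<in>?W. {hd (block f prio L w), last (block f prio L w)})"
    using crowding_dist_pos_imp_block_end by blast
  hence "card {i \<in> front f L 0. 0 < crowding_dist f prio L i}
        \<le> card (\<Union>w\<in>?W. {hd (block f prio L w), last (block f prio L w)})"
    by (intro card_mono) (auto intro: finite_front_0)
  also have "\<dots> \<le> (\<Sum>w\<in>?W. card {hd (block f prio L w), last (block f prio L w)})"
    by (rule card_UN_le) (auto intro: finite_front_0)
  also have "\<dots> \<le> (\<Sum>w\<in>?W. 2)"
    by (intro sum_mono) (simp add: card_insert_le_m1)
  finally show ?thesis by simp
qed

lemma crowding_dist_last_infinite:
  assumes "front f L 0 \<noteq> {}"
  shows "last (sorted_front_0 f prio fst L) \<in> front f L 0"
    and "crowding_dist f prio L (last (sorted_front_0 f prio fst L)) = \<infinity>"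
proof -
  let ?xs = "sorted_front_0 f prio fst L"
  have ne: "?xs \<noteq> []" using set_sorted_front_0[of f prio fst L] assms by auto
  show lf: "last ?xs \<in> front f L 0" using ne set_sorted_front_0[of f prio fst L] by (metis last_in_set)
  have "index_of ?xs (last ?xs) = length ?xs - 1"
    using index_of_nth[OF distinct_sorted_front_0, of "length ?xs - 1"] ne by (simp add: last_conv_nth)
  hence "cd_contrib f fst L ?xs (index_of ?xs (last ?xs)) = \<infinity>"
    by (simp add: cd_contrib_eq_cd_term cd_term_def)
  thus "crowding_dist f prio L (last ?xs) = \<infinity>"
    unfolding crowding_dist_front_0[OF lf] using cd_contrib_nonneg[OF lf, of snd prio] by simp
qed

definition interior_in :: "'a list \<Rightarrow> 'a \<Rightarrow> bool" where
  "interior_in xs b \<longleftrightarrow> 0 < index_of xs b \<and> index_of xs b < length xs - 1"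

lemma crowding_dist_interior:
  assumes i: "i \<in> front f L 0"
    and "interior_in (sorted_front_0 f prio fst L) i" "interior_in (sorted_front_0 f prio snd L) i"
  shows "crowding_dist f prio L i =
    ereal (cd_gap (\<lambda>y. fst (f (L!y))) (sorted_front_0 f prio fst L) (index_of (sorted_front_0 f prio fst L) i)
         + cd_gap (\<lambda>y. snd (f (L!y))) (sorted_front_0 f prio snd L) (index_of (sorted_front_0 f prio snd L) i))"
  using assms(2,3) unfolding crowding_dist_front_0[OF i] cd_contrib_eq_cd_term cd_term_def interior_in_def
  by simp

lemma sum_cd_gap_interior_le_2:
  assumes xs: "distinct xs" and F: "F \<subseteq> set xs" "\<forall>b\<in>F. interior_in xs b"
    and s: "sorted (map \<kappa> xs)"
  shows "(\<Sum>b\<in>F. cd_gap \<kappa> xs (index_of xs b)) \<le> 2"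
proof -
  have "inj_on (index_of xs) F"
    using index_of_in[OF xs] F by (metis inj_onI subsetD)
  hence "(\<Sum>b\<in>F. cd_gap \<kappa> xs (index_of xs b)) = (\<Sum>p\<in>index_of xs ` F. cd_gap \<kappa> xs p)"
    by (simp add: sum.reindex)
  also have "\<dots> \<le> (\<Sum>p\<in>{1..<length xs - 1}. cd_gap \<kappa> xs p)"
    by (rule sum_mono2) (use F cd_gap_nonneg[OF s] in \<open>auto simp: interior_in_def\<close>)
  also have "\<dots> \<le> 2" by (rule sum_cd_gap_le_2[OF s])
  finally show ?thesis .
qed

text \<open>The interior crowding-distance terms of each objective sum to at most \<open>2\<close>.\<close>

lemma card_crowding_dist_greater_interior_le:
  fixes d :: real
  assumes d: "0 < d"
  shows "real (card {b \<in> front f L 0. interior_in (sorted_front_0 f prio fst L) b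
             \<and> interior_in (sorted_front_0 f prio snd L) b \<and> ereal d < crowding_dist f prio L b}) \<le> 4 / d"
    (is "real (card ?F) \<le> _")
proof -
  let ?xf = "sorted_front_0 f prio fst L" and ?xs = "sorted_front_0 f prio snd L"
  let ?gf = "\<lambda>b. cd_gap (\<lambda>y. fst (f (L!y))) ?xf (index_of ?xf b)"
  let ?gs = "\<lambda>b. cd_gap (\<lambda>y. snd (f (L!y))) ?xs (index_of ?xs b)"
  have "real (card ?F) * d = (\<Sum>b\<in>?F. d)" by simp
  also have "\<dots> \<le> (\<Sum>b\<in>?F. ?gf b + ?gs b)"
  proof (rule sum_mono)
    fix b assume b: "b \<in> ?F"
    hence "ereal d < crowding_dist f prio L b" by blast
    also have "\<dots> = ereal (?gf b + ?gs b)" using b by (intro crowding_dist_interior) auto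
    finally show "d \<le> ?gf b + ?gs b" by simp
  qed
  also have "\<dots> = (\<Sum>b\<in>?F. ?gf b) + (\<Sum>b\<in>?F. ?gs b)" by (rule sum.distrib)
  also have "\<dots> \<le> 2 + 2"
    by (intro add_mono sum_cd_gap_interior_le_2 distinct_sorted_front_0 sorted_sorted_front_0)
       (auto simp: set_sorted_front_0)
  finally show ?thesis using d by (simp add: le_divide_eq)
qed

lemma card_crowding_dist_greater_le:
  fixes d :: real
  assumes d: "0 < d"
  shows "real (card {b \<in> front f L 0. ereal d < crowding_dist f prio L b}) \<le> 4 + 4 / d"
proof -
  let ?xf = "sorted_front_0 f prio fst L" and ?xs = "sorted_front_0 f prio snd L"
  let ?T = "{b \<in> front f L 0. ereal d < crowding_dist f prio L b}"
  let ?F = "{b \<in> front f L 0. interior_in ?xf b \<and> interior_in ?xs b \<and> ereal d < crowding_dist f prio L b}"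
  let ?E = "set [?xf ! 0, ?xf ! (length ?xf - 1), ?xs ! 0, ?xs ! (length ?xs - 1)]"
  have "?T \<subseteq> ?E \<union> ?F"
  proof
    fix b assume bT: "b \<in> ?T"
    hence "b \<in> set ?xf" "b \<in> set ?xs" using set_sorted_front_0 by auto
    hence ix: "index_of ?xf b < length ?xf" "?xf ! index_of ?xf b = b"
      "index_of ?xs b < length ?xs" "?xs ! index_of ?xs b = b"
      using index_of_in[OF distinct_sorted_front_0] by blast+
    show "b \<in> ?E \<union> ?F"
    proof (cases "interior_in ?xf b \<and> interior_in ?xs b")
      case True
      then show ?thesis using bT by blast
    next
      case False
      hence "index_of ?xf b = 0 \<or> index_of ?xf b = length ?xf - 1
           \<or> index_of ?xs b = 0 \<or> index_of ?xs b = length ?xs - 1"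
        using ix(1,3) unfolding interior_in_def by linarith
      then show ?thesis using ix(2,4) by auto
    qed
  qed
  hence "card ?T \<le> card (?E \<union> ?F)" by (intro card_mono) (auto intro: finite_subset[OF _ finite_front_0])
  also have "\<dots> \<le> card ?E + card ?F" by (rule card_Un_le)
  also have "\<dots> \<le> 4 + card ?F" using card_length[of "[?xf ! 0, ?xf ! (length ?xf - 1), ?xs ! 0, ?xs ! (length ?xs - 1)]"] by simp
  finally show ?thesis using card_crowding_dist_greater_interior_le[OF d, of f L prio] by linarith
qed

section \<open>Survival selection keeps every objective vector of the first front\<close>

lemma front_0_keys_le:
  assumes "\<forall>x\<in>set R. length x = n"
  shows "\<forall>y\<in>front lotz R 0. fst (lotz (R!y)) \<le> n \<and> snd (lotz (R!y)) \<le> n"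
proof
  fix y assume "y \<in> front lotz R 0"
  hence "R!y \<in> set R" using front_0_subset by fastforce
  thus "fst (lotz (R!y)) \<le> n \<and> snd (lotz (R!y)) \<le> n"
    using assms LO_le_length TZ_le_length by (auto simp: lotz_def)
qed

lemma nth_in_take_if_prefix_in:
  assumes "distinct ys" "p < length ys" "finite A" "\<forall>q\<le>p. ys ! q \<in> A" "card A \<le> N"
  shows "ys ! p \<in> set (take N ys)"
proof -
  have "set (take (Suc p) ys) \<subseteq> A" using assms(4) by (auto simp: in_set_conv_nth)
  hence "card (set (take (Suc p) ys)) \<le> card A" using assms(3) by (rule card_mono[rotated])
  moreover have "card (set (take (Suc p) ys)) = Suc p" using assms(1,2) by (simp add: distinct_card)
  ultimately have "p < N" using assms(5) by simp
  thus ?thesis using assms(2) by (simp add: in_set_conv_nth) (metis length_take min_less_iff_conj nth_take)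
qed

lemma length_survival: "N \<le> length R \<Longrightarrow> length (survival f prio N R) = N"
  and set_survival_subset: "set (survival f prio N R) \<subseteq> set R"
proof -
  let ?ys = "sort_key (rank f R) (sort_key (\<lambda>i. - crowding_dist f prio R i) (sort_key (prio R) [0..<length R]))"
  let ?K = "set (take N ?ys)"
  have "distinct ?ys" "set ?ys = {..<length R}" "length ?ys = length R" by auto
  hence K: "?K \<subseteq> {..<length R}" "N \<le> length R \<Longrightarrow> card ?K = N"
    by (metis set_take_subset) (simp add: distinct_card)
  have "set (filter (\<lambda>i. i \<in> ?K) [0..<length R]) = ?K" using K by auto
  hence "length (filter (\<lambda>i. i \<in> ?K) [0..<length R]) = card ?K"
    using distinct_card[of "filter (\<lambda>i. i \<in> ?K) [0..<length R]"] by simp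
  thus "N \<le> length R \<Longrightarrow> length (survival f prio N R) = N" using K unfolding survival_def Let_def by simp
  show "set (survival f prio N R) \<subseteq> set R" unfolding survival_def Let_def by auto
qed

text \<open>Survival is a stable selection by rank and then crowding distance; at most \<open>2n + 2 \<le> N\<close>
  rank-\<open>0\<close> solutions have positive crowding distance, so the first member \<open>h\<close> of the block of
  \<open>R!i\<close> (which has positive distance) is among the first \<open>N\<close>.\<close>

lemma survival_keeps_front_0_vector:
  assumes NR: "N \<le> length R" and Nn: "2 * (n + 1) \<le> N" and len: "\<forall>x\<in>set R. length x = n"
    and n0: "0 < n" and i: "i \<in> front lotz R 0"
  shows "\<exists>y\<in>set (survival lotz prio N R). lotz y = lotz (R!i)"
proof -
  define cd where "cd = crowding_dist lotz prio R"
  define ys where "ys = sort_key (rank lotz R) (sort_key (\<lambda>i. - cd i) (sort_key (prio R) [0..<length R]))"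
  define A where "A = {k \<in> front lotz R 0. 0 < cd k}"
  have keys: "\<forall>y\<in>front lotz R 0. fst (lotz (R!y)) \<le> n \<and> snd (lotz (R!y)) \<le> n"
    using front_0_keys_le[OF len] .
  have cardA: "card A \<le> N"
    using card_crowding_dist_pos_le[of lotz R prio] card_front_0_vectors_le[of lotz R n] keys Nn
    unfolding A_def cd_def by simp
  define h where "h = hd (block lotz prio R (lotz (R!i)))"
  have h: "h \<in> front lotz R 0" "lotz (R!h) = lotz (R!i)" "hd (block lotz prio R (lotz (R!h))) = h"
    using hd_block[OF i, of prio] unfolding h_def by auto
  have hA: "h \<in> A" unfolding A_def cd_def using h crowding_dist_block_start_pos[OF h(1) h(3) keys n0] by simp
  have hl: "h < length R" using h(1) front_0_subset by auto
  have ys: "distinct ys" "set ys = {..<length R}" unfolding ys_def by auto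
  obtain p where p: "p < length ys" "ys ! p = h" using hl ys by (metis in_set_conv_nth lessThan_iff)
  have "ys ! q \<in> A" if qp: "q \<le> p" for q
  proof -
    have "\<forall>y\<in>set (sort_key (prio R) [0..<length R]). rank lotz R (ys ! p) \<le> rank lotz R y"
      using p(2) rank_front_0[OF h(1)] by simp
    from sort_key_sort_key_prefix[OF ys_def p(1) qp this]
    have "rank lotz R (ys ! q) = 0" "cd h \<le> cd (ys ! q)" using p(2) rank_front_0[OF h(1)] by auto
    moreover have "0 < cd h" using hA by (simp add: A_def)
    ultimately show "ys ! q \<in> A"
      unfolding A_def cd_def using crowding_dist_rank_0_not_front_0 by fastforce
  qed
  hence "h \<in> set (take N ys)"
    using nth_in_take_if_prefix_in[OF ys(1) p(1) _ _ cardA] p(2) finite_front_0 by (simp add: A_def)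
  hence "R ! h \<in> set (survival lotz prio N R)"
    unfolding survival_def ys_def cd_def Let_def using hl by auto
  thus ?thesis using h(2) by blast
qed

section \<open>The potential\<close>

definition valid_pop :: "nat \<Rightarrow> nat \<Rightarrow> bool list list \<Rightarrow> bool" where
  "valid_pop n N P \<longleftrightarrow> length P = N \<and> (\<forall>x\<in>set P. length x = n)"

definition max_LO :: "bool list list \<Rightarrow> nat" where
  "max_LO P = Max (LO ` set P)"

definition covered :: "nat \<Rightarrow> bool list list \<Rightarrow> nat set" where
  "covered n P = {j. j \<le> n \<and> (\<exists>x\<in>set P. lotz x = (j, n - j))}"

definition potential :: "nat \<Rightarrow> bool list list \<Rightarrow> nat" where
  "potential n P = max_LO P + card (covered n P)"

lemma covered_subset: "covered n P \<subseteq> {..n}" and finite_covered: "finite (covered n P)"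
  by (auto simp: covered_def intro: finite_subset[of _ "{..n}"])

lemma card_covered_le: "card (covered n P) \<le> n + 1"
  using card_mono[OF _ covered_subset, of n P] by simp

lemma covered_append: "covered n P \<subseteq> covered n (P @ Q)"
  unfolding covered_def by auto

lemma LO_le_max_LO: "x \<in> set P \<Longrightarrow> LO x \<le> max_LO P"
  unfolding max_LO_def by (intro Max_ge) auto

lemma max_LO_append: "P \<noteq> [] \<Longrightarrow> max_LO P \<le> max_LO (P @ Q)"
  unfolding max_LO_def by (intro Max_mono) auto

lemma max_LO_le: "valid_pop n N P \<Longrightarrow> 0 < N \<Longrightarrow> max_LO P \<le> n"
  unfolding max_LO_def valid_pop_def using LO_le_length by (cases "set P = {}") (auto intro!: Max.boundedI)

lemma potential_le: "valid_pop n N P \<Longrightarrow> 0 < N \<Longrightarrow> potential n P \<le> 2 * n + 1"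
  using max_LO_le card_covered_le[of n P] unfolding potential_def by fastforce

lemma covers_front_iff: "covers_front n P \<longleftrightarrow> covered n P = {..n}"
  unfolding covers_front_def covered_def by auto

lemma survival_preserves:
  fixes prio :: "bool list list \<Rightarrow> nat \<Rightarrow> nat"
  assumes P: "valid_pop n N P" and Q: "\<forall>q\<in>set Q. length q = n" and Nn: "2 * (n + 1) \<le> N" and n0: "0 < n"
  defines "P' \<equiv> survival lotz prio N (P @ Q)"
  shows "valid_pop n N P'" "max_LO (P @ Q) \<le> max_LO P'" "covered n (P @ Q) \<subseteq> covered n P'"
proof -
  let ?R = "P @ Q"
  have NR: "N \<le> length ?R" using P by (simp add: valid_pop_def)
  have lenR: "\<forall>x\<in>set ?R. length x = n" using P Q by (auto simp: valid_pop_def)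
  show "valid_pop n N P'"
    using length_survival[OF NR] set_survival_subset lenR unfolding P'_def valid_pop_def by blast
  have "?R \<noteq> []" using NR Nn by auto
  then obtain i where i: "i \<in> front lotz ?R 0" "LO (?R ! i) = max_LO ?R"
    using front_0_contains_max_LO unfolding max_LO_def by blast
  obtain z where "z \<in> set P'" "lotz z = lotz (?R ! i)"
    using survival_keeps_front_0_vector[OF NR Nn lenR n0 i(1)] unfolding P'_def by blast
  thus "max_LO ?R \<le> max_LO P'" using LO_le_max_LO i(2) by (metis fst_conv lotz_def)
  show "covered n ?R \<subseteq> covered n P'"
  proof
    fix j assume "j \<in> covered n ?R"
    then obtain x where "x \<in> set ?R" "lotz x = (j, n - j)" "j \<le> n" by (auto simp: covered_def)
    then obtain i where i: "i < length ?R" "lotz (?R ! i) = (j, n - j)" "j \<le> n"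
      by (metis in_set_conv_nth)
    from survival_keeps_front_0_vector[OF NR Nn lenR n0 pareto_point_in_front_0[OF i(1) lenR i(2,3)]]
    obtain z where "z \<in> set P'" "lotz z = (j, n - j)" using i unfolding P'_def by auto
    thus "j \<in> covered n P'" using i(3) by (auto simp: covered_def)
  qed
qed

lemma potential_survival_mono:
  assumes P: "valid_pop n N P" and Q: "\<forall>q\<in>set Q. length q = n" and Nn: "2 * (n + 1) \<le> N" and n0: "0 < n"
  shows "potential n P \<le> potential n (survival lotz prio N (P @ Q))"
proof -
  have "P \<noteq> []" using P Nn by (auto simp: valid_pop_def)
  note keep = survival_preserves[OF P Q Nn n0, of prio]
  have "max_LO P \<le> max_LO (survival lotz prio N (P @ Q))" using max_LO_append[OF \<open>P \<noteq> []\<close>, of Q] keep(2) by simp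
  moreover have "card (covered n P) \<le> card (covered n (survival lotz prio N (P @ Q)))"
    using covered_append[of n P Q] keep(3) by (intro card_mono finite_covered) auto
  ultimately show ?thesis unfolding potential_def by simp
qed

section \<open>Probabilities of the variation operators\<close>

lemma pmf_bind_ge: "pmf M a * pmf (f a) x \<le> pmf (bind_pmf M f) x"
proof -
  have "ennreal (pmf M a * pmf (f a) x) = ennreal (pmf (f a) x) * emeasure (measure_pmf M) {a}"
    by (simp add: emeasure_pmf_single ennreal_mult mult.commute)
  also have "\<dots> = \<integral>\<^sup>+ a'. ennreal (pmf (f a) x) * indicator {a} a' \<partial>measure_pmf M"
    by (simp add: nn_integral_cmult_indicator)
  also have "\<dots> \<le> \<integral>\<^sup>+ a'. ennreal (pmf (f a') x) \<partial>measure_pmf M"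
    by (intro nn_integral_mono) (auto split: split_indicator)
  also have "\<dots> = ennreal (pmf (bind_pmf M f) x)" by (simp add: ennreal_pmf_bind)
  finally show ?thesis by (simp add: ennreal_le_iff)
qed

lemma pmf_bind_ge_const:
  assumes "\<And>a. a \<in> set_pmf M \<Longrightarrow> c \<le> pmf (f a) x"
  shows "c \<le> pmf (bind_pmf M f) x"
proof (cases "0 \<le> c")
  case False
  then show ?thesis using pmf_nonneg[of "bind_pmf M f" x] by linarith
next
  case True
  have "ennreal c = \<integral>\<^sup>+ a. ennreal c \<partial>measure_pmf M"
    by (simp add: measure_pmf.emeasure_space_1)
  also have "\<dots> \<le> \<integral>\<^sup>+ a. ennreal (pmf (f a) x) \<partial>measure_pmf M"
    by (intro nn_integral_mono_AE) (auto simp: AE_measure_pmf_iff assms)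
  also have "\<dots> = ennreal (pmf (bind_pmf M f) x)" by (simp add: ennreal_pmf_bind)
  finally show ?thesis by (simp add: ennreal_le_iff)
qed

lemma pmf_map_pmf_ge: "pmf M a \<le> pmf (map_pmf g M) (g a)"
proof -
  have "pmf M a = measure_pmf.prob M {a}" by (simp add: measure_pmf_single)
  also have "\<dots> \<le> measure_pmf.prob M (g -` {g a})" by (intro measure_pmf.finite_measure_mono) auto
  finally show ?thesis by (simp add: pmf_map)
qed

lemma pmf_seq_pmf_ge:
  "length ys = length ps \<Longrightarrow> (\<Prod>i<length ps. pmf (ps!i) (ys!i)) \<le> pmf (seq_pmf ps) ys"
proof (induction ps arbitrary: ys)
  case Nil
  then show ?case by simp
next
  case (Cons p ps)
  then obtain y ys' where ys: "ys = y # ys'" "length ys' = length ps" by (cases ys) auto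
  have "(\<Prod>i<Suc (length ps). pmf ((p#ps)!i) ((y#ys')!i)) = pmf p y * (\<Prod>i<length ps. pmf (ps!i) (ys'!i))"
    by (subst prod.lessThan_Suc_shift) simp
  hence "(\<Prod>i<length (p#ps). pmf ((p#ps)!i) (ys!i)) = pmf p y * (\<Prod>i<length ps. pmf (ps!i) (ys'!i))"
    using ys by simp
  also have "\<dots> \<le> pmf p y * pmf (seq_pmf ps) ys'"
    by (intro mult_left_mono Cons.IH ys(2)) simp
  also have "\<dots> = pmf p y * (pmf (seq_pmf ps) ys' * pmf (return_pmf (y # ys')) (y # ys'))" by simp
  also have "\<dots> \<le> pmf p y * pmf (bind_pmf (seq_pmf ps) (\<lambda>xs. return_pmf (y # xs))) (y # ys')"
    by (intro mult_left_mono pmf_bind_ge) simp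
  also have "\<dots> \<le> pmf (seq_pmf (p # ps)) ys"
    unfolding ys seq_pmf.simps by (rule pmf_bind_ge[of p y "\<lambda>x. bind_pmf (seq_pmf ps) (\<lambda>xs. return_pmf (x # xs))"])
  finally show ?case .
qed

lemma prod_if_eq_single:
  assumes "k < n"
  shows "(\<Prod>i<n. if i = k then a else b) = a * b ^ (n - 1)"
proof -
  have "(\<Prod>i<n. if i = k then a else b) = (if k = k then a else b) * (\<Prod>i\<in>{..<n} - {k}. if i = k then a else b)"
    by (rule prod.remove) (use assms in auto)
  also have "(\<Prod>i\<in>{..<n} - {k}. if i = k then a else b) = (\<Prod>i\<in>{..<n} - {k}. b)"
    by (intro prod.cong) auto
  also have "\<dots> = b ^ (n - 1)" using assms by simp
  finally show ?thesis by simp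
qed

lemma one_third_le_power_one_minus_inverse: "1 / 3 \<le> (1 - 1 / real n) ^ (n - 1)"
proof (cases "n \<le> 1")
  case True
  then show ?thesis by (cases n) auto
next
  case False
  define m where "m = n - 1"
  have m: "1 \<le> m" "n = m + 1" using False by (auto simp: m_def)
  have "(1 + 1 / real m) ^ m \<le> exp (1 / real m) ^ m"
    by (intro power_mono exp_ge_add_one_self) auto
  also have "\<dots> = exp 1" using m by (simp add: exp_of_nat_mult[symmetric])
  also have "\<dots> \<le> 3" using e_less_272 by simp
  finally have b: "(1 + 1 / real m) ^ m \<le> 3" .
  have pos: "0 < (1 + 1 / real m) ^ m" using m by (simp add: add_pos_nonneg)
  have "1 - 1 / real n = 1 / (1 + 1 / real m)" using m by (simp add: field_simps)
  hence "(1 - 1 / real n) ^ (n - 1) = 1 / (1 + 1 / real m) ^ m"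
    unfolding m_def[symmetric] by (simp add: power_one_over)
  also have "\<dots> \<ge> 1 / 3" using b pos by (intro divide_left_mono) auto
  finally show ?thesis .
qed

lemma pmf_mutate_flip_ge:
  assumes n: "length x = n" and k: "k < n"
  shows "1 / (3 * real n) \<le> pmf (mutate n x) (x[k := \<not> x ! k])"
proof -
  let ?ps = "map (\<lambda>b. map_pmf (\<lambda>c. if c then \<not> b else b) (bernoulli_pmf (1 / real n))) x"
  let ?y = "x[k := \<not> x ! k]"
  have q: "0 \<le> 1 / real n" "1 / real n \<le> 1" using k by auto
  have "1 / (3 * real n) \<le> (1 / real n) * (1 - 1 / real n) ^ (n - 1)"
    using mult_left_mono[OF one_third_le_power_one_minus_inverse q(1), of n] by simp
  also have "\<dots> = (\<Prod>i<n. if i = k then 1 / real n else 1 - 1 / real n)"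
    using prod_if_eq_single[OF k, of "1 / real n" "1 - 1 / real n"] by simp
  also have "\<dots> \<le> (\<Prod>i<length ?ps. pmf (?ps!i) (?y!i))"
  proof (unfold length_map n, rule prod_mono)
    fix i assume i: "i \<in> {..<n}"
    have "pmf (bernoulli_pmf (1 / real n)) (i = k) \<le> pmf (?ps ! i) ((\<lambda>c. if c then \<not> x!i else x!i) (i = k))"
    proof -
      have "?ps ! i = map_pmf (\<lambda>c. if c then \<not> x!i else x!i) (bernoulli_pmf (1 / real n))"
        using i n by simp
      thus ?thesis by (simp only:) (rule pmf_map_pmf_ge)
    qed
    thus "0 \<le> (if i = k then 1 / real n else 1 - 1 / real n) \<and>
          (if i = k then 1 / real n else 1 - 1 / real n) \<le> pmf (?ps ! i) (?y ! i)"
      using q n i by (cases "i = k") (simp_all add: pmf_bernoulli_True pmf_bernoulli_False)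
  qed
  also have "\<dots> \<le> pmf (seq_pmf ?ps) ?y" by (rule pmf_seq_pmf_ge) (simp add: n)
  finally show ?thesis by (simp add: mutate_def)
qed

lemma pmf_crossover_keep_ge: "1 / 10 \<le> pmf (crossover n a b) (a, b)"
proof -
  have "pmf (bernoulli_pmf (9/10)) False * pmf (return_pmf (a, b)) (a, b) \<le> pmf (crossover n a b) (a, b)"
    unfolding crossover_def by (rule order_trans[OF _ pmf_bind_ge[of _ False]]) simp
  thus ?thesis by (simp add: pmf_bernoulli_False)
qed

text \<open>\<open>variation\<close> of \<open>2k\<close> independent parents drawn from \<open>T\<close> produces, among other offspring,
  \<open>k\<close> independent samples of \<open>first_child_dist n T\<close>.\<close>

definition first_child :: "nat \<Rightarrow> bool list \<Rightarrow> bool list \<Rightarrow> bool list pmf" where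
  "first_child n a b = bind_pmf (crossover n a b) (\<lambda>c. mutate n (fst c))"

definition first_child_dist :: "nat \<Rightarrow> bool list pmf \<Rightarrow> bool list pmf" where
  "first_child_dist n T = bind_pmf T (\<lambda>a. bind_pmf T (\<lambda>b. first_child n a b))"

definition offspring :: "nat \<Rightarrow> bool list pmf \<Rightarrow> nat \<Rightarrow> bool list list pmf" where
  "offspring n T k = bind_pmf (seq_pmf (replicate (2 * k) T)) (variation n)"

lemma pmf_first_child_dist_flip_ge:
  assumes "length x = n" "k < n"
  shows "pmf T x * (1 / 10) * (1 / (3 * real n)) \<le> pmf (first_child_dist n T) (x[k := \<not> x ! k])"
proof -
  let ?y = "x[k := \<not> x ! k]"
  have "(1 / 10) * (1 / (3 * real n)) \<le> pmf (first_child n x b) ?y" for b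
  proof -
    have "(1 / 10) * (1 / (3 * real n)) \<le> pmf (crossover n x b) (x, b) * pmf (mutate n (fst (x, b))) ?y"
      using pmf_crossover_keep_ge[of n x b] pmf_mutate_flip_ge[OF assms] by (intro mult_mono) auto
    also have "\<dots> \<le> pmf (first_child n x b) ?y" unfolding first_child_def by (rule pmf_bind_ge)
    finally show ?thesis .
  qed
  hence "(1 / 10) * (1 / (3 * real n)) \<le> pmf (bind_pmf T (\<lambda>b. first_child n x b)) ?y"
    by (intro pmf_bind_ge_const)
  hence "pmf T x * ((1 / 10) * (1 / (3 * real n))) \<le> pmf T x * pmf (bind_pmf T (\<lambda>b. first_child n x b)) ?y"
    by (intro mult_left_mono) auto
  also have "\<dots> \<le> pmf (first_child_dist n T) ?y" unfolding first_child_dist_def by (rule pmf_bind_ge)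
  finally show ?thesis by (simp add: mult.assoc)
qed

lemma mutate_pair_Cons_misses_le:
  "emeasure (measure_pmf (bind_pmf (mutate n c1) (\<lambda>m1. bind_pmf (mutate n c2) (\<lambda>m2.
       bind_pmf V (\<lambda>r. return_pmf (m1 # m2 # r)))))) {Q. y \<notin> set Q}
   \<le> emeasure (measure_pmf (mutate n c1)) {m. m \<noteq> y} * emeasure (measure_pmf V) {Q. y \<notin> set Q}"
proof -
  define X where "X = {Q. y \<notin> set Q}"
  define eV where "eV = emeasure (measure_pmf V) X"
  have inner: "emeasure (measure_pmf (bind_pmf V (\<lambda>r. return_pmf (m1 # m2 # r)))) X \<le> indicator {m. m \<noteq> y} m1 * eV"
    for m1 m2
  proof -
    have "emeasure (measure_pmf (bind_pmf V (\<lambda>r. return_pmf (m1 # m2 # r)))) X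
        = \<integral>\<^sup>+ r. indicator X (m1 # m2 # r) \<partial>measure_pmf V"
      by (simp add: emeasure_bind_pmf emeasure_return_pmf)
    also have "\<dots> \<le> \<integral>\<^sup>+ r. indicator {m. m \<noteq> y} m1 * indicator X r \<partial>measure_pmf V"
      unfolding X_def by (intro nn_integral_mono) (auto split: split_indicator)
    also have "\<dots> = indicator {m. m \<noteq> y} m1 * eV"
      unfolding eV_def by (simp add: nn_integral_cmult)
    finally show ?thesis .
  qed
  have middle: "emeasure (measure_pmf (bind_pmf (mutate n c2) (\<lambda>m2. bind_pmf V (\<lambda>r. return_pmf (m1 # m2 # r))))) X
       \<le> indicator {m. m \<noteq> y} m1 * eV" for m1
  proof -
    have "emeasure (measure_pmf (bind_pmf (mutate n c2) (\<lambda>m2. bind_pmf V (\<lambda>r. return_pmf (m1 # m2 # r))))) X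
        = \<integral>\<^sup>+ m2. emeasure (measure_pmf (bind_pmf V (\<lambda>r. return_pmf (m1 # m2 # r)))) X \<partial>measure_pmf (mutate n c2)"
      by (simp add: emeasure_bind_pmf)
    also have "\<dots> \<le> \<integral>\<^sup>+ m2. indicator {m. m \<noteq> y} m1 * eV \<partial>measure_pmf (mutate n c2)"
      by (intro nn_integral_mono inner)
    also have "\<dots> = indicator {m. m \<noteq> y} m1 * eV" by (simp add: measure_pmf.emeasure_space_1)
    finally show ?thesis .
  qed
  have "emeasure (measure_pmf (bind_pmf (mutate n c1) (\<lambda>m1. bind_pmf (mutate n c2) (\<lambda>m2.
       bind_pmf V (\<lambda>r. return_pmf (m1 # m2 # r)))))) X
      = \<integral>\<^sup>+ m1. emeasure (measure_pmf (bind_pmf (mutate n c2) (\<lambda>m2. bind_pmf V (\<lambda>r. return_pmf (m1 # m2 # r))))) X \<partial>measure_pmf (mutate n c1)"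
    by (simp add: emeasure_bind_pmf)
  also have "\<dots> \<le> \<integral>\<^sup>+ m1. indicator {m. m \<noteq> y} m1 * eV \<partial>measure_pmf (mutate n c1)"
    by (intro nn_integral_mono middle)
  also have "\<dots> = emeasure (measure_pmf (mutate n c1)) {m. m \<noteq> y} * eV"
    by (simp add: nn_integral_multc)
  finally show ?thesis unfolding X_def eV_def .
qed

lemma variation_Cons_misses_le:
  "emeasure (measure_pmf (variation n (a # b # rest))) {Q. y \<notin> set Q}
   \<le> emeasure (measure_pmf (first_child n a b)) {m. m \<noteq> y} * emeasure (measure_pmf (variation n rest)) {Q. y \<notin> set Q}"
proof -
  define eV where "eV = emeasure (measure_pmf (variation n rest)) {Q. y \<notin> set Q}"
  have "emeasure (measure_pmf (variation n (a # b # rest))) {Q. y \<notin> set Q}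
      = \<integral>\<^sup>+ c. emeasure (measure_pmf (bind_pmf (mutate n (fst c)) (\<lambda>m1. bind_pmf (mutate n (snd c)) (\<lambda>m2.
       bind_pmf (variation n rest) (\<lambda>r. return_pmf (m1 # m2 # r)))))) {Q. y \<notin> set Q} \<partial>measure_pmf (crossover n a b)"
    by (simp add: emeasure_bind_pmf split_beta)
  also have "\<dots> \<le> \<integral>\<^sup>+ c. emeasure (measure_pmf (mutate n (fst c))) {m. m \<noteq> y} * eV \<partial>measure_pmf (crossover n a b)"
    unfolding eV_def by (intro nn_integral_mono mutate_pair_Cons_misses_le)
  also have "\<dots> = emeasure (measure_pmf (first_child n a b)) {m. m \<noteq> y} * eV"
    by (simp add: nn_integral_multc first_child_def emeasure_bind_pmf)
  finally show ?thesis unfolding eV_def .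
qed

lemma nn_integral_seq_pmf_Cons:
  "(\<integral>\<^sup>+ s. h s \<partial>measure_pmf (seq_pmf (p # ps))) = (\<integral>\<^sup>+ a. \<integral>\<^sup>+ xs. h (a # xs) \<partial>measure_pmf (seq_pmf ps) \<partial>measure_pmf p)"
proof -
  have "seq_pmf (p # ps) = bind_pmf p (\<lambda>a. map_pmf (Cons a) (seq_pmf ps))"
    by (simp add: map_pmf_def)
  thus ?thesis by (simp add: nn_integral_bind_pmf nn_integral_map_pmf)
qed

lemma offspring_Suc_misses_le:
  "emeasure (measure_pmf (offspring n T (Suc k))) {Q. y \<notin> set Q}
    \<le> emeasure (measure_pmf (first_child_dist n T)) {m. m \<noteq> y} * emeasure (measure_pmf (offspring n T k)) {Q. y \<notin> set Q}"
proof -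
  define X where "X = {Q. y \<notin> set Q}"
  define eG where "eG = emeasure (measure_pmf (offspring n T k)) X"
  define R where "R = replicate (2 * k) T"
  have eG: "eG = \<integral>\<^sup>+ xs. emeasure (measure_pmf (variation n xs)) X \<partial>measure_pmf (seq_pmf R)"
    unfolding eG_def offspring_def R_def by (simp add: emeasure_bind_pmf)
  have "emeasure (measure_pmf (offspring n T (Suc k))) X
     = \<integral>\<^sup>+ s. emeasure (measure_pmf (variation n s)) X \<partial>measure_pmf (seq_pmf (T # T # R))"
    unfolding offspring_def R_def by (simp add: emeasure_bind_pmf)
  also have "\<dots> = \<integral>\<^sup>+ a. \<integral>\<^sup>+ b. \<integral>\<^sup>+ xs. emeasure (measure_pmf (variation n (a # b # xs))) X
                     \<partial>measure_pmf (seq_pmf R) \<partial>measure_pmf T \<partial>measure_pmf T"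
    by (simp add: nn_integral_seq_pmf_Cons)
  also have "\<dots> \<le> \<integral>\<^sup>+ a. \<integral>\<^sup>+ b. \<integral>\<^sup>+ xs. emeasure (measure_pmf (first_child n a b)) {m. m \<noteq> y} *
                     emeasure (measure_pmf (variation n xs)) X
                     \<partial>measure_pmf (seq_pmf R) \<partial>measure_pmf T \<partial>measure_pmf T"
    unfolding X_def by (intro nn_integral_mono variation_Cons_misses_le)
  also have "\<dots> = \<integral>\<^sup>+ a. \<integral>\<^sup>+ b. emeasure (measure_pmf (first_child n a b)) {m. m \<noteq> y} * eG
                     \<partial>measure_pmf T \<partial>measure_pmf T"
    unfolding eG by (simp add: nn_integral_cmult)
  also have "\<dots> = emeasure (measure_pmf (first_child_dist n T)) {m. m \<noteq> y} * eG"
    by (simp add: nn_integral_multc first_child_dist_def emeasure_bind_pmf)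
  finally show ?thesis unfolding X_def eG_def .
qed

lemma emeasure_pmf_neq: "emeasure (measure_pmf M) {m. m \<noteq> y} = ennreal (1 - pmf M y)"
proof -
  have "{m. m \<noteq> y} = space (measure_pmf M) - {y}" by auto
  hence "measure_pmf.prob M {m. m \<noteq> y} = 1 - measure_pmf.prob M {y}"
    using measure_pmf.prob_compl[of "{y}" M] by simp
  thus ?thesis by (simp add: measure_pmf.emeasure_eq_measure measure_pmf_single)
qed

lemma offspring_misses_le:
  assumes r: "r \<le> pmf (first_child_dist n T) y" "0 \<le> r"
  shows "emeasure (measure_pmf (offspring n T k)) {Q. y \<notin> set Q} \<le> ennreal ((1 - r) ^ k)"
proof (induction k)
  case 0
  then show ?case by (simp add: offspring_def emeasure_return_pmf)
next
  case (Suc k)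
  have "emeasure (measure_pmf (offspring n T (Suc k))) {Q. y \<notin> set Q}
      \<le> emeasure (measure_pmf (first_child_dist n T)) {m. m \<noteq> y} * emeasure (measure_pmf (offspring n T k)) {Q. y \<notin> set Q}"
    by (rule offspring_Suc_misses_le)
  also have "\<dots> \<le> ennreal (1 - r) * ennreal ((1 - r) ^ k)"
    unfolding emeasure_pmf_neq by (intro mult_mono Suc.IH ennreal_leI) (use r in auto)
  also have "\<dots> = ennreal ((1 - r) ^ Suc k)"
    using r pmf_le_1[of "first_child_dist n T" y] by (simp add: ennreal_mult[symmetric] mult.commute)
  finally show ?case .
qed

lemma offspring_hits_ge:
  assumes r: "r \<le> pmf (first_child_dist n T) y" "0 \<le> r"
  shows "1 - (1 - r) ^ k \<le> measure_pmf.prob (offspring n T k) {Q. y \<in> set Q}"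
proof -
  have "ennreal (measure_pmf.prob (offspring n T k) {Q. y \<notin> set Q}) \<le> ennreal ((1 - r) ^ k)"
    using offspring_misses_le[OF r, of k] by (simp add: measure_pmf.emeasure_eq_measure)
  hence "measure_pmf.prob (offspring n T k) {Q. y \<notin> set Q} \<le> (1 - r) ^ k"
    using r pmf_le_1[of "first_child_dist n T" y] by (simp add: ennreal_le_iff)
  moreover have "{Q. y \<in> set Q} = space (measure_pmf (offspring n T k)) - {Q. y \<notin> set Q}" by auto
  ultimately show ?thesis using measure_pmf.prob_compl[of "{Q. y \<notin> set Q}" "offspring n T k"] by simp
qed

lemma one_minus_power_ge:
  fixes r :: real
  assumes r: "0 \<le> r" "r \<le> 1" and K: "real K * r \<le> 1"
  shows "real K * r / 2 \<le> 1 - (1 - r) ^ K"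
proof -
  have pos: "0 < 1 + real K * r" using r by (simp add: add_pos_nonneg)
  have "(1 - r) ^ K * (1 + real K * r) \<le> (1 - r) ^ K * (1 + r) ^ K"
    using Bernoulli_inequality[of r K] r by (intro mult_left_mono) auto
  also have "\<dots> = (1 - r * r) ^ K" by (simp add: power_mult_distrib[symmetric] algebra_simps)
  also have "\<dots> \<le> 1" using r by (intro power_le_one) (auto simp: mult_le_one)
  finally have "(1 - r) ^ K \<le> 1 / (1 + real K * r)" using pos by (simp add: le_divide_eq)
  moreover have "real K * r / 2 \<le> real K * r / (1 + real K * r)"
    using K pos r by (intro divide_left_mono) auto
  moreover have "1 - 1 / (1 + real K * r) = real K * r / (1 + real K * r)" using pos by (simp add: field_simps)
  ultimately show ?thesis by linarith
qed

section \<open>Tournament selection\<close>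

lemma pmf_tournament_ge:
  assumes i: "i < length P"
  shows "real (card {b. b < length P \<and> \<not> crowded_better f prio P b i}) / (2 * real (length P) ^ 2)
           \<le> pmf (tournament f prio P) (P ! i)"
proof -
  define N where "N = length P"
  define U where "U = {..<N}"
  define cb where "cb = crowded_better f prio P"
  define X where "X a b = (if cb a b then return_pmf a else if cb b a then return_pmf b else pmf_of_set {a, b})" for a b
  have "0 < N" using i unfolding N_def by linarith
  hence U: "finite U" "U \<noteq> {}" "card U = N" by (auto simp: U_def)
  have N0: "0 < real N" using \<open>0 < N\<close> by simp
  have "(if \<not> cb b i then 1 / 2 else 0) \<le> pmf (map_pmf (\<lambda>j. P ! j) (X i b)) (P ! i)" for b
  proof (cases "cb b i")
    case False
    have "1 / 2 \<le> pmf (X i b) i"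
      using False by (cases "i = b") (auto simp: X_def pmf_of_set)
    also have "\<dots> \<le> pmf (map_pmf (\<lambda>j. P ! j) (X i b)) (P ! i)" by (rule pmf_map_pmf_ge)
    finally show ?thesis using False by simp
  qed simp
  hence "(\<Sum>b\<in>U. if \<not> cb b i then 1 / 2 else 0) \<le> (\<Sum>b\<in>U. pmf (map_pmf (\<lambda>j. P ! j) (X i b)) (P ! i))"
    by (intro sum_mono)
  moreover have "real (card {b \<in> U. \<not> cb b i}) / 2 = (\<Sum>b\<in>U. if \<not> cb b i then 1 / 2 else 0)"
    using U by (simp add: sum.If_cases Int_def)
  ultimately have s: "real (card {b \<in> U. \<not> cb b i}) / 2 \<le> (\<Sum>b\<in>U. pmf (map_pmf (\<lambda>j. P ! j) (X i b)) (P ! i))"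
    by simp
  have "real (card {b \<in> U. \<not> cb b i}) / (2 * real N ^ 2)
      = (1 / real N) * ((real (card {b \<in> U. \<not> cb b i}) / 2) / real N)"
    by (simp add: power2_eq_square)
  also have "\<dots> \<le> (1 / real N) * ((\<Sum>b\<in>U. pmf (map_pmf (\<lambda>j. P ! j) (X i b)) (P ! i)) / real N)"
    using s N0 by (intro mult_left_mono divide_right_mono) auto
  also have "\<dots> = pmf (pmf_of_set U) i * pmf (bind_pmf (pmf_of_set U) (\<lambda>b. map_pmf (\<lambda>j. P ! j) (X i b))) (P ! i)"
    using U i by (simp add: pmf_bind_pmf_of_set pmf_of_set U_def N_def)
  also have "\<dots> \<le> pmf (bind_pmf (pmf_of_set U) (\<lambda>a. bind_pmf (pmf_of_set U) (\<lambda>b. map_pmf (\<lambda>j. P ! j) (X a b)))) (P ! i)"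
    by (rule pmf_bind_ge)
  also have "\<dots> = pmf (tournament f prio P) (P ! i)"
    unfolding tournament_def U_def N_def X_def cb_def by simp
  finally show ?thesis unfolding U_def N_def cb_def by (simp add: lessThan_def)
qed

lemma pmf_tournament_unbeaten_ge:
  assumes i: "i < length P" and unbeaten: "\<forall>b<length P. \<not> crowded_better f prio P b i"
  shows "1 / (2 * real (length P)) \<le> pmf (tournament f prio P) (P ! i)"
proof -
  have "{b. b < length P \<and> \<not> crowded_better f prio P b i} = {..<length P}" using unbeaten by auto
  moreover have "P \<noteq> []" using i by auto
  ultimately show ?thesis using pmf_tournament_ge[OF i, of f prio] i by (simp add: power2_eq_square)
qed

lemma pmf_tournament_front_0_ge:
  fixes d :: real
  assumes i: "i \<in> front f P 0" and d: "0 < d" "ereal d \<le> crowding_dist f prio P i"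
  shows "(real (length P) - (4 + 4 / d)) / (2 * real (length P) ^ 2) \<le> pmf (tournament f prio P) (P ! i)"
proof -
  let ?good = "{b. b < length P \<and> \<not> crowded_better f prio P b i}"
  let ?bad = "{b. b < length P \<and> crowded_better f prio P b i}"
  have "?bad \<subseteq> {b \<in> front f P 0. ereal d < crowding_dist f prio P b}"
  proof
    fix b assume "b \<in> ?bad"
    hence b: "b < length P" "rank f P b = 0" "crowding_dist f prio P i < crowding_dist f prio P b"
      using rank_front_0[OF i] by (auto simp: crowded_better_def)
    hence "ereal d < crowding_dist f prio P b" using d(2) by order
    moreover from this have "b \<in> front f P 0"
      using crowding_dist_rank_0_not_front_0[OF _ b(2)] d(1) by fastforce
    ultimately show "b \<in> {b \<in> front f P 0. ereal d < crowding_dist f prio P b}" by simp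
  qed
  hence "card ?bad \<le> card {b \<in> front f P 0. ereal d < crowding_dist f prio P b}"
    by (rule card_mono[rotated]) (simp add: finite_front_0)
  hence "real (card ?bad) \<le> 4 + 4 / d"
    using card_crowding_dist_greater_le[OF d(1), of f P prio] by linarith
  moreover have "card ?good + card ?bad = length P"
  proof -
    have "?good \<union> ?bad = {..<length P}" "?good \<inter> ?bad = {}" by auto
    thus ?thesis using card_Un_disjoint[of ?good ?bad] by simp
  qed
  ultimately have "real (length P) - (4 + 4 / d) \<le> real (card ?good)" by linarith
  hence "(real (length P) - (4 + 4 / d)) / (2 * real (length P) ^ 2) \<le> real (card ?good) / (2 * real (length P) ^ 2)"
    by (intro divide_right_mono) auto
  also have "\<dots> \<le> pmf (tournament f prio P) (P ! i)"
    using i front_0_subset by (intro pmf_tournament_ge) auto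
  finally show ?thesis .
qed

lemma set_pmf_tournament:
  assumes "P \<noteq> []"
  shows "set_pmf (tournament f prio P) \<subseteq> set P"
proof -
  have "finite {..<length P}" "{..<length P} \<noteq> {}" using assms by auto
  thus ?thesis unfolding tournament_def by (auto simp: set_pmf_of_set split: if_splits)
qed

lemma set_pmf_seq_pmf:
  "xs \<in> set_pmf (seq_pmf ps) \<Longrightarrow> length xs = length ps \<and> (\<forall>i<length ps. xs ! i \<in> set_pmf (ps ! i))"
proof (induction ps arbitrary: xs)
  case (Cons p ps)
  then obtain a xs' where "xs = a # xs'" "a \<in> set_pmf p" "xs' \<in> set_pmf (seq_pmf ps)" by auto
  with Cons.IH[of xs'] show ?case by (auto simp: nth_Cons split: nat.splits)
qed simp

lemma set_pmf_seq_pmf_replicate: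
  "xs \<in> set_pmf (seq_pmf (replicate N T)) \<Longrightarrow> length xs = N \<and> set xs \<subseteq> set_pmf T"
  using set_pmf_seq_pmf[of xs "replicate N T"] by (auto simp: in_set_conv_nth)

lemma length_mutate: "z \<in> set_pmf (mutate n x) \<Longrightarrow> length z = length x"
  unfolding mutate_def using set_pmf_seq_pmf by fastforce

lemma length_crossover:
  "c \<in> set_pmf (crossover n a b) \<Longrightarrow> length a = m \<Longrightarrow> length b = m \<Longrightarrow> length (fst c) = m \<and> length (snd c) = m"
  unfolding crossover_def by (auto simp: set_pmf_of_set split: if_splits)

lemma length_variation:
  "Q \<in> set_pmf (variation n S) \<Longrightarrow> \<forall>x\<in>set S. length x = m \<Longrightarrow> \<forall>q\<in>set Q. length q = m"
proof (induction n S arbitrary: Q rule: variation.induct)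
  case (1 n x y rest)
  from 1(2) obtain c m1 m2 r where c: "c \<in> set_pmf (crossover n x y)" and
    m1: "m1 \<in> set_pmf (mutate n (fst c))" and m2: "m2 \<in> set_pmf (mutate n (snd c))"
    and r: "r \<in> set_pmf (variation n rest)" and Q: "Q = m1 # m2 # r"
    by (auto simp: split_beta)
  have "length (fst c) = m \<and> length (snd c) = m" using length_crossover[OF c] 1(3) by simp
  moreover have "\<forall>q\<in>set r. length q = m" using 1(1)[OF _ _ _ _ r] 1(3) c m1 m2
    by (metis list.set_intros(2) prod.exhaust_sel)
  ultimately show ?case using Q length_mutate[OF m1] length_mutate[OF m2] by auto
qed simp_all

lemma length_offspring:
  assumes "Q \<in> set_pmf (offspring n T K)" "\<forall>x\<in>set_pmf T. length x = n"
  shows "\<forall>q\<in>set Q. length q = n"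
proof -
  obtain S where S: "S \<in> set_pmf (seq_pmf (replicate (2 * K) T))" "Q \<in> set_pmf (variation n S)"
    using assms(1) unfolding offspring_def by auto
  have "\<forall>x\<in>set S. length x = n" using set_pmf_seq_pmf_replicate[OF S(1)] assms(2) by auto
  thus ?thesis by (rule length_variation[OF S(2)])
qed

lemma valid_pop_init_pop:
  assumes "P \<in> set_pmf (init_pop n N)"
  shows "valid_pop n N P"
proof -
  have "length P = N \<and> set P \<subseteq> set_pmf (uniform_string n)"
    using set_pmf_seq_pmf_replicate[of P N "uniform_string n"] assms by (simp add: init_pop_def)
  moreover have "length x = n" if "x \<in> set_pmf (uniform_string n)" for x
    using set_pmf_seq_pmf[of x "replicate n (bernoulli_pmf (1/2))"] that by (simp add: uniform_string_def)
  ultimately show ?thesis by (auto simp: valid_pop_def)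
qed

definition improving_flip :: "nat \<Rightarrow> nat \<Rightarrow> (bool list list \<Rightarrow> nat \<Rightarrow> nat) \<Rightarrow> bool list list \<Rightarrow> bool list \<Rightarrow> nat \<Rightarrow> bool" where
  "improving_flip n N prio P x k \<longleftrightarrow> length x = n \<and> k < n \<and>
     (\<forall>Q. (\<forall>q\<in>set Q. length q = n) \<longrightarrow> x[k := \<not> x ! k] \<in> set Q \<longrightarrow>
          potential n P + 1 \<le> potential n (survival lotz prio N (P @ Q)))"

lemma improving_flip_first_zero:
  fixes prio :: "bool list list \<Rightarrow> nat \<Rightarrow> nat"
  assumes P: "valid_pop n N P" and Nn: "2 * (n + 1) \<le> N" and n0: "0 < n"
    and x: "x \<in> set P" "LO x = max_LO P" and m: "max_LO P < n"
  shows "improving_flip n N prio P x (LO x)"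
proof -
  have lx: "length x = n" using P x(1) by (simp add: valid_pop_def)
  have "\<not> x ! LO x" unfolding LO_def using nth_length_takeWhile[of id x] lx x(2) m LO_def by simp
  hence flip: "x[LO x := \<not> x ! LO x] = x[LO x := True]" by simp
  have "potential n P + 1 \<le> potential n (survival lotz prio N (P @ Q))"
    if Q: "\<forall>q\<in>set Q. length q = n" and yQ: "x[LO x := \<not> x ! LO x] \<in> set Q" for Q
  proof -
    note keep = survival_preserves[OF P Q Nn n0, of prio]
    have "Suc (max_LO P) \<le> LO (x[LO x := True])" using LO_flip_first_zero[of x] lx x(2) m by simp
    also have "\<dots> \<le> max_LO (P @ Q)" using yQ flip by (intro LO_le_max_LO) simp
    also have "\<dots> \<le> max_LO (survival lotz prio N (P @ Q))" using keep(2) .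
    finally have "max_LO P + 1 \<le> max_LO (survival lotz prio N (P @ Q))" by simp
    moreover have "card (covered n P) \<le> card (covered n (survival lotz prio N (P @ Q)))"
      using covered_append[of n P Q] keep(3) by (intro card_mono finite_covered) auto
    ultimately show ?thesis unfolding potential_def by simp
  qed
  thus ?thesis unfolding improving_flip_def using lx x(2) m by simp
qed

lemma improving_flip_last_one:
  fixes prio :: "bool list list \<Rightarrow> nat \<Rightarrow> nat"
  assumes P: "valid_pop n N P" and Nn: "2 * (n + 1) \<le> N" and n0: "0 < n"
    and x: "x \<in> set P" "lotz x = (Suc u, n - Suc u)" and u: "u < n" "u \<notin> covered n P"
  shows "improving_flip n N prio P x u"
proof -
  have lx: "length x = n" using P x(1) by (simp add: valid_pop_def)
  have shape: "x = replicate (Suc u) True @ replicate (n - Suc u) False"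
    using lotz_eq_pareto_pointD[OF lx x(2)] u(1) by simp
  hence "x ! u" by (simp add: nth_append del: replicate_Suc)
  hence "x[u := \<not> x ! u] = (replicate (Suc u) True @ replicate (n - Suc u) False)[Suc u - 1 := False]"
    using shape by simp
  also have "\<dots> = replicate u True @ replicate (n - u) False"
    using replicate_flip_last_one[of "Suc u" n] u(1) by simp
  finally have flip: "lotz (x[u := \<not> x ! u]) = (u, n - u)" by (simp add: lotz_replicate)
  have "potential n P + 1 \<le> potential n (survival lotz prio N (P @ Q))"
    if Q: "\<forall>q\<in>set Q. length q = n" and yQ: "x[u := \<not> x ! u] \<in> set Q" for Q
  proof -
    note keep = survival_preserves[OF P Q Nn n0, of prio]
    have "u \<in> covered n (P @ Q)" using yQ flip u(1) by (auto simp: covered_def)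
    hence "covered n P \<subset> covered n (survival lotz prio N (P @ Q))"
      using covered_append[of n P Q] keep(3) u(2) by auto
    hence "card (covered n P) < card (covered n (survival lotz prio N (P @ Q)))"
      by (intro psubset_card_mono finite_covered)
    moreover have "P \<noteq> []" using x(1) by auto
    hence "max_LO P \<le> max_LO (survival lotz prio N (P @ Q))"
      using max_LO_append[of P Q] keep(2) by simp
    ultimately show ?thesis unfolding potential_def by simp
  qed
  thus ?thesis unfolding improving_flip_def using lx u(1) by simp
qed

lemma max_LO_last_sorted_front_0:
  assumes "P \<noteq> []"
  shows "LO (P ! last (sorted_front_0 lotz prio fst P)) = max_LO P"
proof -
  let ?xs = "sorted_front_0 lotz prio fst P"
  obtain i0 where i0: "i0 \<in> front lotz P 0" "LO (P!i0) = max_LO P"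
    using front_0_contains_max_LO[OF assms] unfolding max_LO_def by blast
  then obtain q where q: "q < length ?xs" "?xs ! q = i0" using set_sorted_front_0 by (metis in_set_conv_nth)
  hence "?xs \<noteq> []" by auto
  hence "last ?xs \<in> front lotz P 0" using set_sorted_front_0 by (metis last_in_set)
  hence "last ?xs < length P" using front_0_subset by fastforce
  hence "LO (P ! last ?xs) \<le> max_LO P" by (intro LO_le_max_LO) simp
  moreover have "fst (lotz (P ! (?xs ! q))) \<le> fst (lotz (P ! (?xs ! (length ?xs - 1))))"
  proof -
    have "\<forall>i j. i \<le> j \<longrightarrow> j < length ?xs \<longrightarrow> fst (lotz (P ! (?xs ! i))) \<le> fst (lotz (P ! (?xs ! j)))"
      using sorted_sorted_front_0[where f=lotz and prio=prio and g=fst and L=P] by (simp add: sorted_iff_nth_mono)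
    moreover have "q \<le> length ?xs - 1" "length ?xs - 1 < length ?xs" using q by auto
    ultimately show ?thesis by blast
  qed
  ultimately show ?thesis using q i0 \<open>?xs \<noteq> []\<close> by (simp add: lotz_def last_conv_nth)
qed

lemma selected_improving_flip_max_LO_lt:
  fixes prio :: "bool list list \<Rightarrow> nat \<Rightarrow> nat"
  assumes P: "valid_pop n N P" and Nn: "2 * (n + 1) \<le> N" and n0: "0 < n" and m: "max_LO P < n"
  shows "\<exists>x k. 1 / (12 * real N) \<le> pmf (tournament lotz prio P) x \<and> improving_flip n N prio P x k"
proof -
  have lP: "length P = N" using P by (simp add: valid_pop_def)
  hence "P \<noteq> []" using Nn by auto
  then obtain i0 where "i0 \<in> front lotz P 0" using front_0_contains_max_LO by blast
  hence "front lotz P 0 \<noteq> {}" by auto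
  note last = crowding_dist_last_infinite[OF this, of prio]
  define i where "i = last (sorted_front_0 lotz prio fst P)"
  have il: "i < length P" using last(1) front_0_subset unfolding i_def by fastforce
  have LOi: "LO (P ! i) = max_LO P" unfolding i_def by (rule max_LO_last_sorted_front_0[OF \<open>P \<noteq> []\<close>])
  have "\<forall>b<length P. \<not> crowded_better lotz prio P b i"
    using last rank_front_0[OF last(1)] unfolding i_def by (simp add: crowded_better_def)
  from pmf_tournament_unbeaten_ge[OF il this]
  have "1 / (2 * real N) \<le> pmf (tournament lotz prio P) (P ! i)" using lP by simp
  moreover have "1 / (12 * real N) \<le> 1 / (2 * real N)" using Nn by (simp add: frac_le)
  ultimately have "1 / (12 * real N) \<le> pmf (tournament lotz prio P) (P ! i)" by linarith
  moreover have "improving_flip n N prio P (P ! i) (LO (P ! i))"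
    using il LOi by (intro improving_flip_first_zero[OF P Nn n0 _ _ m]) auto
  ultimately show ?thesis by blast
qed

lemma largest_uncovered_pareto_index:
  assumes P: "valid_pop n N P" "P \<noteq> []" and m: "max_LO P = n" and nc: "\<not> covers_front n P"
  obtains u where "u < n" "u \<notin> covered n P" "Suc u \<in> covered n P"
proof -
  have "max_LO P \<in> LO ` set P" using P(2) unfolding max_LO_def by (intro Max_in) auto
  then obtain x where x: "x \<in> set P" "LO x = n" using m by auto
  hence "TZ x = 0" using LO_plus_TZ_le[of x] P(1) by (simp add: valid_pop_def)
  hence nC: "n \<in> covered n P" using x by (auto simp: covered_def lotz_def)
  define U where "U = {j. j \<le> n \<and> j \<notin> covered n P}"
  have "U \<noteq> {}" using nc covered_subset[of n P] unfolding covers_front_iff U_def by auto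
  hence uU: "Max U \<in> U" by (intro Max_in) (auto simp: U_def)
  show ?thesis
  proof
    show "Max U < n" "Max U \<notin> covered n P" using uU nC by (auto simp: U_def order.order_iff_strict)
    show "Suc (Max U) \<in> covered n P"
    proof (rule ccontr)
      assume "Suc (Max U) \<notin> covered n P"
      hence "Suc (Max U) \<in> U" using \<open>Max U < n\<close> by (simp add: U_def)
      hence "Suc (Max U) \<le> Max U" by (intro Max_ge) (auto simp: U_def)
      thus False by simp
    qed
  qed
qed

text \<open>The left neighbour \<open>(u, n - u)\<close> of \<open>(u + 1, n - u - 1)\<close> is missing, so in the first front the
  nearest smaller \<open>LO\<close> value is at most \<open>u - 1\<close>: a gap of \<open>2\<close> in the first objective.\<close>

lemma crowding_dist_right_of_gap_ge:
  assumes P: "valid_pop n N P" and i: "i \<in> front lotz P 0" "hd (block lotz prio P (lotz (P ! i))) = i"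
    and x: "lotz (P ! i) = (Suc u, n - Suc u)" and u: "u < n" "u \<notin> covered n P"
  shows "ereal (3 / real n) \<le> crowding_dist lotz prio P i"
proof -
  have lens: "\<forall>x\<in>set P. length x = n" using P by (simp add: valid_pop_def)
  have gap: "\<forall>y\<in>front lotz P 0. fst (lotz (P!y)) < fst (lotz (P!i)) \<longrightarrow> fst (lotz (P!y)) + 2 \<le> fst (lotz (P!i))"
  proof (intro ballI impI)
    fix y assume y: "y \<in> front lotz P 0" and lt: "fst (lotz (P!y)) < fst (lotz (P!i))"
    show "fst (lotz (P!y)) + 2 \<le> fst (lotz (P!i))"
    proof (rule ccontr)
      assume "\<not> ?thesis"
      hence fy: "fst (lotz (P!y)) = u" using lt x by simp
      have "snd (lotz (P!i)) < snd (lotz (P!y))" by (rule front_0_fst_less_imp_snd_greater[OF i(1) y lt])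
      moreover have yl: "y < length P" using y front_0_subset by fastforce
      hence "fst (lotz (P!y)) + snd (lotz (P!y)) \<le> n" using lotz_sum_le[of "P!y"] lens by simp
      ultimately have "lotz (P!y) = (u, n - u)" using fy x u(1) by (cases "lotz (P!y)") auto
      hence "u \<in> covered n P" using yl u(1) by (auto simp: covered_def)
      thus False using u(2) by simp
    qed
  qed
  have "ereal (real 2 / real n) + ereal (1 / real n) \<le> crowding_dist lotz prio P i"
    by (rule crowding_dist_block_start_ge[OF i _ gap front_0_keys_le[OF lens]]) simp
  moreover have "ereal (real 2 / real n) + ereal (1 / real n) = ereal (3 / real n)"
    by (simp add: add_divide_distrib[symmetric])
  ultimately show ?thesis by simp
qed

lemma selected_improving_flip_max_LO_eq:
  fixes prio :: "bool list list \<Rightarrow> nat \<Rightarrow> nat"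
  assumes P: "valid_pop n N P" and Nn: "2 * (n + 1) \<le> N" and n7: "7 \<le> n" and m: "max_LO P = n"
    and nc: "\<not> covers_front n P"
  shows "\<exists>x k. 1 / (12 * real N) \<le> pmf (tournament lotz prio P) x \<and> improving_flip n N prio P x k"
proof -
  have n0: "0 < n" using n7 by simp
  have lens: "\<forall>x\<in>set P. length x = n" and lP: "length P = N" using P by (auto simp: valid_pop_def)
  obtain u where u: "u < n" "u \<notin> covered n P" "Suc u \<in> covered n P"
    using largest_uncovered_pareto_index[OF P _ m nc] lP Nn by force
  then obtain i1 where i1: "i1 < length P" "lotz (P ! i1) = (Suc u, n - Suc u)"
    by (auto simp: covered_def in_set_conv_nth)
  have "i1 \<in> front lotz P 0" by (rule pareto_point_in_front_0[OF i1(1) lens i1(2)]) (use u in simp)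
  define i where "i = hd (block lotz prio P (lotz (P ! i1)))"
  have i: "i \<in> front lotz P 0" "lotz (P ! i) = (Suc u, n - Suc u)" "hd (block lotz prio P (lotz (P ! i))) = i"
    using hd_block[OF \<open>i1 \<in> front lotz P 0\<close>, of prio] i1(2) unfolding i_def by auto
  have il: "i < length P" using i(1) front_0_subset by fastforce
  have "(real N - (4 + 4 / (3 / real n))) / (2 * real N ^ 2) \<le> pmf (tournament lotz prio P) (P ! i)"
    using pmf_tournament_front_0_ge[OF i(1) _ crowding_dist_right_of_gap_ge[OF P i(1,3,2) u(1,2)]] n0 lP
    by simp
  moreover have "1 / (12 * real N) \<le> (real N - (4 + 4 / (3 / real n))) / (2 * real N ^ 2)"
  proof -
    have "real (2 * (n + 1)) \<le> real N" using Nn by (simp only: of_nat_le_iff)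
    hence "2 * real n + 2 \<le> real N" by simp
    moreover have "7 \<le> real n" using n7 by simp
    moreover have "4 / (3 / real n) = 4 * real n / 3" by simp
    ultimately have "real N / 6 \<le> real N - (4 + 4 / (3 / real n))" by linarith
    hence "(real N / 6) / (2 * real N ^ 2) \<le> (real N - (4 + 4 / (3 / real n))) / (2 * real N ^ 2)"
      by (intro divide_right_mono) auto
    moreover have "1 / (12 * real N) = (real N / 6) / (2 * real N ^ 2)"
      using Nn by (simp add: power2_eq_square field_simps)
    ultimately show ?thesis by linarith
  qed
  moreover have "improving_flip n N prio P (P ! i) u"
    using il i(2) u(1,2) by (intro improving_flip_last_one[OF P Nn n0]) auto
  ultimately show ?thesis by (meson order_trans)
qed

lemma nsga2_step_eq_offspring:
  assumes "even N"
  shows "nsga2_step n N prio P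
           = map_pmf (\<lambda>Q. survival lotz prio N (P @ Q)) (offspring n (tournament lotz prio P) (N div 2))"
proof -
  have "2 * (N div 2) = N" using assms by simp
  thus ?thesis unfolding nsga2_step_def offspring_def by (simp add: map_bind_pmf)
qed

lemma nsga2_step_support:
  assumes P: "valid_pop n N P" and ev: "even N" and Nn: "2 * (n + 1) \<le> N" and n0: "0 < n"
    and P': "P' \<in> set_pmf (nsga2_step n N prio P)"
  shows "valid_pop n N P'" "potential n P \<le> potential n P'"
proof -
  have "P \<noteq> []" using P Nn by (auto simp: valid_pop_def)
  hence T: "\<forall>x\<in>set_pmf (tournament lotz prio P). length x = n"
    using set_pmf_tournament[of P lotz prio] P by (auto simp: valid_pop_def)
  obtain Q where Q: "Q \<in> set_pmf (offspring n (tournament lotz prio P) (N div 2))"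
    "P' = survival lotz prio N (P @ Q)"
    using P' unfolding nsga2_step_eq_offspring[OF ev] by auto
  have lQ: "\<forall>q\<in>set Q. length q = n" by (rule length_offspring[OF Q(1) T])
  show "valid_pop n N P'" "potential n P \<le> potential n P'"
    using survival_preserves(1)[OF P lQ Nn n0, of prio] potential_survival_mono[OF P lQ Nn n0, of prio] Q(2)
    by simp_all
qed

text \<open>A selected parent \<open>x\<close> with an improving flip becomes the first child of a given pair with
  probability \<open>r \<ge> 1/(12N) \<cdot> 1/10 \<cdot> 1/(3n)\<close>; over \<open>N/2\<close> pairs, \<open>1 - (1 - r)\<^bsup>N/2\<^esup> \<ge> (N/2) r / 2 = 1/(1440 n)\<close>.\<close>

lemma prob_potential_increase_ge:
  assumes P: "valid_pop n N P" and ev: "even N" and Nn: "2 * (n + 1) \<le> N" and n7: "7 \<le> n"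
    and nc: "\<not> covers_front n P"
  shows "1 / (1440 * real n) \<le> measure_pmf.prob (nsga2_step n N prio P) {P'. potential n P + 1 \<le> potential n P'}"
proof -
  have n0: "0 < n" and N0: "0 < N" using n7 Nn by auto
  define T where "T = tournament lotz prio P"
  have "P \<noteq> []" using P Nn by (auto simp: valid_pop_def)
  hence lenT: "\<forall>x\<in>set_pmf T. length x = n"
    using set_pmf_tournament[of P lotz prio] P unfolding T_def by (auto simp: valid_pop_def)
  have "max_LO P < n \<or> max_LO P = n" using max_LO_le[OF P N0] by linarith
  then obtain x k where sel: "1 / (12 * real N) \<le> pmf T x" and flip: "improving_flip n N prio P x k"
    using selected_improving_flip_max_LO_lt[OF P Nn n0] selected_improving_flip_max_LO_eq[OF P Nn n7 _ nc]
    unfolding T_def by blast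
  define y where "y = x[k := \<not> x!k]"
  define r where "r = 1 / (12 * real N) * (1 / 10) * (1 / (3 * real n))"
  define K where "K = N div 2"
  have "1 \<le> real N * (real n * 360)"
    using mult_mono[of 1 "real N" 1 "real n * 360"] N0 n0 by simp
  hence r: "0 \<le> r" "r \<le> 1" unfolding r_def using N0 n0 by (auto simp: field_simps)
  have "r \<le> pmf T x * (1 / 10) * (1 / (3 * real n))"
    unfolding r_def using sel by (intro mult_right_mono) auto
  also have "\<dots> \<le> pmf (first_child_dist n T) y"
    unfolding y_def using flip by (intro pmf_first_child_dist_flip_ge) (auto simp: improving_flip_def)
  finally have rT: "r \<le> pmf (first_child_dist n T) y" .
  have Kr: "real K * r = 1 / (720 * real n)"
    using ev N0 unfolding K_def r_def by (auto simp: field_simps elim!: evenE)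
  have "1 / (1440 * real n) \<le> 1 - (1 - r) ^ K"
    using one_minus_power_ge[OF r, of K] n0 unfolding Kr by (simp add: field_simps)
  also have "\<dots> \<le> measure_pmf.prob (offspring n T K) {Q. y \<in> set Q}"
    by (rule offspring_hits_ge[OF rT r(1)])
  also have "\<dots> = measure_pmf.prob (offspring n T K) ({Q. y \<in> set Q} \<inter> set_pmf (offspring n T K))"
    by (simp add: measure_Int_set_pmf)
  also have "\<dots> \<le> measure_pmf.prob (offspring n T K)
                   ((\<lambda>Q. survival lotz prio N (P @ Q)) -` {P'. potential n P + 1 \<le> potential n P'})"
    using flip length_offspring[OF _ lenT] unfolding y_def improving_flip_def
    by (intro measure_pmf.finite_measure_mono) auto
  also have "\<dots> = measure_pmf.prob (nsga2_step n N prio P) {P'. potential n P + 1 \<le> potential n P'}"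
    unfolding nsga2_step_eq_offspring[OF ev] T_def K_def by (simp add: measure_map_pmf)
  finally show ?thesis .
qed

section \<open>Additive drift\<close>

lemma expected_gap_decrease:
  fixes St :: "'a pmf" and \<Phi> :: "'a \<Rightarrow> nat" and A :: real
  assumes A: "0 < A" and range: "\<And>x. x \<in> set_pmf St \<Longrightarrow> \<phi> \<le> \<Phi> x \<and> \<Phi> x \<le> m" and "\<phi> \<le> m"
    and prog: "1 / A \<le> measure_pmf.prob St {x. \<phi> + 1 \<le> \<Phi> x}"
  shows "(\<integral>\<^sup>+ x. ennreal (A * real (m - \<Phi> x)) \<partial>St) + 1 \<le> ennreal (A * real (m - \<phi>))"
proof -
  define E where "E = {x. \<phi> + 1 \<le> \<Phi> x}"
  have pointwise: "ennreal (A * real (m - \<Phi> x)) + ennreal A * indicator E x \<le> ennreal (A * real (m - \<phi>))"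
    if x: "x \<in> set_pmf St" for x
  proof -
    have "real (m - \<Phi> x) + indicator E x \<le> real (m - \<phi>)"
      using range[OF x] \<open>\<phi> \<le> m\<close> unfolding E_def by (auto split: split_indicator)
    hence "A * real (m - \<Phi> x) + A * indicator E x \<le> A * real (m - \<phi>)"
      using A by (simp add: distrib_left[symmetric])
    moreover have "ennreal (A * real (m - \<Phi> x)) + ennreal A * indicator E x
                 = ennreal (A * real (m - \<Phi> x) + A * indicator E x)"
      using A by (cases "x \<in> E") (simp_all add: ennreal_plus)
    ultimately show ?thesis by (simp add: ennreal_leI)
  qed
  have "1 \<le> ennreal A * emeasure (measure_pmf St) E"
  proof -
    have "1 = ennreal (A * (1 / A))" using A by simp
    also have "\<dots> \<le> ennreal (A * measure_pmf.prob St E)" using prog A unfolding E_def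
      by (intro ennreal_leI mult_left_mono) auto
    finally show ?thesis using A by (simp add: ennreal_mult measure_pmf.emeasure_eq_measure)
  qed
  hence "(\<integral>\<^sup>+ x. ennreal (A * real (m - \<Phi> x)) \<partial>St) + 1
       \<le> (\<integral>\<^sup>+ x. ennreal (A * real (m - \<Phi> x)) \<partial>St) + ennreal A * emeasure (measure_pmf St) E"
    by (rule add_left_mono)
  also have "\<dots> = \<integral>\<^sup>+ x. ennreal (A * real (m - \<Phi> x)) + ennreal A * indicator E x \<partial>St"
    by (simp add: nn_integral_add nn_integral_cmult_indicator)
  also have "\<dots> \<le> \<integral>\<^sup>+ x. ennreal (A * real (m - \<phi>)) \<partial>St"
    by (intro nn_integral_mono_AE) (auto simp: AE_measure_pmf_iff pointwise)
  also have "\<dots> = ennreal (A * real (m - \<phi>))" by (simp add: measure_pmf.emeasure_space_1)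
  finally show ?thesis .
qed

lemma suminf_emeasure_le_drift:
  fixes M :: "nat \<Rightarrow> 'a pmf" and K :: "'a \<Rightarrow> 'a pmf" and g :: "'a \<Rightarrow> ennreal"
  assumes step: "\<And>t. M (Suc t) = bind_pmf (M t) K"
    and drift: "\<And>t s. s \<in> set_pmf (M t) \<Longrightarrow> (\<integral>\<^sup>+ s'. g s' \<partial>K s) + indicator B s \<le> g s"
  shows "(\<Sum>t. emeasure (measure_pmf (M t)) B) \<le> (\<integral>\<^sup>+ s. g s \<partial>M 0)"
proof -
  have partial: "(\<integral>\<^sup>+ s. g s \<partial>M T) + (\<Sum>t<T. emeasure (measure_pmf (M t)) B) \<le> (\<integral>\<^sup>+ s. g s \<partial>M 0)" for T
  proof (induction T)
    case (Suc T)
    have "(\<integral>\<^sup>+ s. g s \<partial>M (Suc T)) + emeasure (measure_pmf (M T)) B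
        = \<integral>\<^sup>+ s. (\<integral>\<^sup>+ s'. g s' \<partial>K s) + indicator B s \<partial>M T"
      by (simp add: step nn_integral_bind_pmf nn_integral_add)
    also have "\<dots> \<le> \<integral>\<^sup>+ s. g s \<partial>M T"
      by (intro nn_integral_mono_AE) (simp add: AE_measure_pmf_iff drift)
    finally have "(\<integral>\<^sup>+ s. g s \<partial>M (Suc T)) + emeasure (measure_pmf (M T)) B \<le> \<integral>\<^sup>+ s. g s \<partial>M T" .
    hence "(\<integral>\<^sup>+ s. g s \<partial>M (Suc T)) + (\<Sum>t<Suc T. emeasure (measure_pmf (M t)) B)
        \<le> (\<integral>\<^sup>+ s. g s \<partial>M T) + (\<Sum>t<T. emeasure (measure_pmf (M t)) B)"
      by (simp add: ac_simps add_left_mono del: step)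
    with Suc.IH show ?case by order
  qed simp
  have "(\<Sum>t<T. emeasure (measure_pmf (M t)) B) \<le> (\<integral>\<^sup>+ s. g s \<partial>M 0)" for T
    using partial[of T] by (meson add_increasing zero_le order_trans order_refl)
  thus ?thesis by (simp add: suminf_eq_SUP SUP_least)
qed

definition hist_step :: "nat \<Rightarrow> nat \<Rightarrow> (bool list list \<Rightarrow> nat \<Rightarrow> nat) \<Rightarrow> bool list list \<times> bool \<Rightarrow> (bool list list \<times> bool) pmf" where
  "hist_step n N prio = (\<lambda>(P, h). map_pmf (\<lambda>P'. (P', h \<or> covers_front n P')) (nsga2_step n N prio P))"

definition gap_potential :: "nat \<Rightarrow> real \<Rightarrow> bool list list \<times> bool \<Rightarrow> ennreal" where
  "gap_potential n A s = (if snd s then 0 else ennreal (A * real (2 * n + 1 - potential n (fst s))))"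

lemma nsga2_hist_Suc_bind: "nsga2_hist n N prio (Suc t) = bind_pmf (nsga2_hist n N prio t) (hist_step n N prio)"
  by (simp add: hist_step_def)

lemma nsga2_hist_invariant:
  assumes "even N" "2 * (n + 1) \<le> N" "0 < n"
  shows "s \<in> set_pmf (nsga2_hist n N prio t) \<Longrightarrow> valid_pop n N (fst s) \<and> (covers_front n (fst s) \<longrightarrow> snd s)"
proof (induction t arbitrary: s)
  case 0
  then show ?case using valid_pop_init_pop by auto
next
  case (Suc t)
  then obtain P h P' where s: "(P, h) \<in> set_pmf (nsga2_hist n N prio t)" "P' \<in> set_pmf (nsga2_step n N prio P)"
    "s = (P', h \<or> covers_front n P')"
    by (auto simp: nsga2_hist_Suc_bind hist_step_def)
  thus ?case using Suc.IH[OF s(1)] nsga2_step_support(1)[OF _ assms s(2)] by simp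
qed

lemma gap_potential_drift:
  assumes ev: "even N" and Nn: "2 * (n + 1) \<le> N" and n7: "7 \<le> n"
    and inv: "valid_pop n N (fst s) \<and> (covers_front n (fst s) \<longrightarrow> snd s)"
  shows "(\<integral>\<^sup>+ s'. gap_potential n (1440 * real n) s' \<partial>hist_step n N prio s) + indicator {s. \<not> snd s} s
           \<le> gap_potential n (1440 * real n) s"
proof (cases "snd s")
  case True
  hence "\<forall>s'\<in>set_pmf (hist_step n N prio s). gap_potential n (1440 * real n) s' = 0"
    by (auto simp: hist_step_def gap_potential_def split: prod.splits)
  hence "(\<integral>\<^sup>+ s'. gap_potential n (1440 * real n) s' \<partial>hist_step n N prio s) = 0"
    by (simp add: nn_integral_0_iff_AE AE_measure_pmf_iff)
  then show ?thesis using True by (simp add: gap_potential_def)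
next
  case False
  then obtain P where s: "s = (P, False)" by (metis prod.collapse)
  have n0: "0 < n" and N0: "0 < N" using n7 Nn by auto
  have P: "valid_pop n N P" and nc: "\<not> covers_front n P" using inv s by auto
  have "(\<integral>\<^sup>+ s'. gap_potential n (1440 * real n) s' \<partial>hist_step n N prio s)
      \<le> \<integral>\<^sup>+ P'. ennreal (1440 * real n * real (2 * n + 1 - potential n P')) \<partial>nsga2_step n N prio P"
    unfolding s hist_step_def by (auto simp: nn_integral_map_pmf gap_potential_def intro!: nn_integral_mono)
  moreover have "(\<integral>\<^sup>+ P'. ennreal (1440 * real n * real (2 * n + 1 - potential n P')) \<partial>nsga2_step n N prio P) + 1
      \<le> ennreal (1440 * real n * real (2 * n + 1 - potential n P))"
  proof (rule expected_gap_decrease)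
    show "potential n P \<le> potential n P' \<and> potential n P' \<le> 2 * n + 1" if "P' \<in> set_pmf (nsga2_step n N prio P)" for P'
      using nsga2_step_support[OF P ev Nn n0 that] potential_le N0 by blast
  qed (use n0 potential_le[OF P N0] prob_potential_increase_ge[OF P ev Nn n7 nc] in auto)
  ultimately show ?thesis using s by (auto simp: gap_potential_def intro: order_trans[OF add_right_mono])
qed

theorem expected_generations_le:
  assumes "even N" "2 * (n + 1) \<le> N" "7 \<le> n"
  shows "expected_generations n N prio \<le> ennreal (1440 * real n * real (2 * n + 1))"
proof -
  have "expected_generations n N prio = (\<Sum>t. emeasure (measure_pmf (nsga2_hist n N prio t)) {s. \<not> snd s})"
    unfolding expected_generations_def by (simp add: measure_pmf.emeasure_eq_measure del: nsga2_hist.simps)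
  also have "\<dots> \<le> \<integral>\<^sup>+ s. gap_potential n (1440 * real n) s \<partial>nsga2_hist n N prio 0"
  proof (rule suminf_emeasure_le_drift)
    show "nsga2_hist n N prio (Suc t) = bind_pmf (nsga2_hist n N prio t) (hist_step n N prio)" for t
      by (rule nsga2_hist_Suc_bind)
    show "(\<integral>\<^sup>+ s'. gap_potential n (1440 * real n) s' \<partial>hist_step n N prio s) + indicator {s. \<not> snd s} s
            \<le> gap_potential n (1440 * real n) s" if "s \<in> set_pmf (nsga2_hist n N prio t)" for t s
      using assms by (intro gap_potential_drift nsga2_hist_invariant[OF _ _ _ that]) auto
  qed
  also have "\<dots> \<le> \<integral>\<^sup>+ s. ennreal (1440 * real n * real (2 * n + 1)) \<partial>nsga2_hist n N prio 0"
    by (intro nn_integral_mono) (auto simp: gap_potential_def intro!: ennreal_leI mult_left_mono)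
  finally show ?thesis by (simp add: measure_pmf.emeasure_space_1)
qed

theorem theorem1:
  fixes c :: real
  shows "\<exists>C n0. \<forall>n N prio. n \<ge> n0 \<and> even N \<and> 2 * n + 2 \<le> N \<and> real N \<le> c * real n \<longrightarrow>
            expected_generations n N prio \<le> ennreal (C * real n ^ 2)"
proof (intro exI allI impI)
  fix n N :: nat and prio :: "bool list list \<Rightarrow> nat \<Rightarrow> nat"
  assume a: "7 \<le> n \<and> even N \<and> 2 * n + 2 \<le> N \<and> real N \<le> c * real n"
  hence "expected_generations n N prio \<le> ennreal (1440 * real n * real (2 * n + 1))"
    by (intro expected_generations_le) auto
  also have "\<dots> \<le> ennreal (4320 * real n ^ 2)"
    using a by (intro ennreal_leI) (simp add: power2_eq_square)
  finally show "expected_generations n N prio \<le> ennreal (4320 * real n ^ 2)" .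
qed

end
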